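(* Let $\mathbf{k}$ be a field of characteristic $\neq 2$. Let $(\wedge V,d)$ be a minimal algebra generated in degree $1$ (i.e. $V=V^1$), and let $(A,d)$, $(B,d)$ be CDGAs over $\mathbf{k}$ with $A^0=\mathbf{k}$. If $f:(\wedge V,d)\to(A,d)$ is a CDGA morphism and $\psi:(B,d)\to(A,d)$ is a quasi-isomorphism (not necessarily surjective), then there is a CDGA morphism $g:(\wedge V,d)\to(B,d)$ with $\psi\circ g=f$. Moreover, if $f$ is a quasi-isomorphism then so is $g$.
   Context: A CDGA over $\mathbf{k}$ is a graded-commutative algebra $A=\bigoplus_{i\ge0}A^i$ with a degree $+1$ derivation $d$, $d^2=0$. A quasi-isomorphism is a CDGA morphism inducing an isomorphism in cohomology. A minimal algebra is a CDGA $(\wedge V,d)$ where $\wedge V$ is the free graded-commutative algebra on a graded vector space $V=\bigoplus_{i\geq1}V^i$, and there is a basis $\{x_\tau\}_{\tau\in I}$ of $V$ indexed by a well-ordered set $I$ such that $\deg x_\mu\le\deg x_\tau$ whenever $\mu<\tau$ and each $dx_\tau$ lies in the subalgebra generated by the $x_\mu$ with $\mu<\tau$. *)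

theory Defs
  imports Main
begin

record ('a, 'k) cdga =
  cg_carrier :: "'a set"
  cg_hom :: "nat \<Rightarrow> 'a set"          (* the degree-i component A^i *)
  cg_zero :: 'a
  cg_add :: "'a \<Rightarrow> 'a \<Rightarrow> 'a"
  cg_smult :: "'k \<Rightarrow> 'a \<Rightarrow> 'a"
  cg_mul :: "'a \<Rightarrow> 'a \<Rightarrow> 'a"
  cg_one :: 'a
  cg_diff :: "'a \<Rightarrow> 'a"

definition cg_sub :: "('a, 'k::field) cdga \<Rightarrow> 'a \<Rightarrow> 'a \<Rightarrow> 'a" where
  "cg_sub A x y = cg_add A x (cg_smult A (-1) y)"

definition cg_lsum :: "('a, 'k) cdga \<Rightarrow> 'a list \<Rightarrow> 'a" where
  "cg_lsum A xs = foldr (cg_add A) xs (cg_zero A)"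

definition cdga :: "('a, 'k::field) cdga \<Rightarrow> bool" where
  "cdga A \<longleftrightarrow>
    \<comment> \<open>vector space over 'k\<close>
    cg_zero A \<in> cg_carrier A \<and> cg_one A \<in> cg_carrier A \<and>
    (\<forall>x\<in>cg_carrier A. \<forall>y\<in>cg_carrier A. cg_add A x y \<in> cg_carrier A) \<and>
    (\<forall>c. \<forall>x\<in>cg_carrier A. cg_smult A c x \<in> cg_carrier A) \<and>
    (\<forall>x\<in>cg_carrier A. \<forall>y\<in>cg_carrier A. cg_mul A x y \<in> cg_carrier A) \<and>
    (\<forall>x\<in>cg_carrier A. cg_diff A x \<in> cg_carrier A) \<and>
    (\<forall>x\<in>cg_carrier A. \<forall>y\<in>cg_carrier A. \<forall>z\<in>cg_carrier A.
        cg_add A (cg_add A x y) z = cg_add A x (cg_add A y z)) \<and>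
    (\<forall>x\<in>cg_carrier A. \<forall>y\<in>cg_carrier A. cg_add A x y = cg_add A y x) \<and>
    (\<forall>x\<in>cg_carrier A. cg_add A (cg_zero A) x = x) \<and>
    (\<forall>x\<in>cg_carrier A. cg_add A x (cg_smult A (-1) x) = cg_zero A) \<and>
    (\<forall>a b. \<forall>x\<in>cg_carrier A. cg_smult A (a * b) x = cg_smult A a (cg_smult A b x)) \<and>
    (\<forall>x\<in>cg_carrier A. cg_smult A 1 x = x) \<and>
    (\<forall>a b. \<forall>x\<in>cg_carrier A. cg_smult A (a + b) x = cg_add A (cg_smult A a x) (cg_smult A b x)) \<and>
    (\<forall>a. \<forall>x\<in>cg_carrier A. \<forall>y\<in>cg_carrier A.
        cg_smult A a (cg_add A x y) = cg_add A (cg_smult A a x) (cg_smult A a y)) \<and>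
    \<comment> \<open>grading: A = direct sum of the subspaces A^i, i \<ge> 0\<close>
    (\<forall>i. cg_hom A i \<subseteq> cg_carrier A \<and> cg_zero A \<in> cg_hom A i \<and>
         (\<forall>x\<in>cg_hom A i. \<forall>y\<in>cg_hom A i. cg_add A x y \<in> cg_hom A i) \<and>
         (\<forall>c. \<forall>x\<in>cg_hom A i. cg_smult A c x \<in> cg_hom A i)) \<and>
    (\<forall>x\<in>cg_carrier A. \<exists>!c::nat \<Rightarrow> 'a. (\<forall>i. c i \<in> cg_hom A i) \<and>
         (\<exists>N. (\<forall>i\<ge>N. c i = cg_zero A) \<and> x = cg_lsum A (map c [0..<N]))) \<and>
    \<comment> \<open>graded algebra: associative, unital, bilinear, A^i A^j \<subseteq> A^(i+j)\<close>
    (\<forall>x\<in>cg_carrier A. \<forall>y\<in>cg_carrier A. \<forall>z\<in>cg_carrier A.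
        cg_mul A (cg_mul A x y) z = cg_mul A x (cg_mul A y z)) \<and>
    (\<forall>x\<in>cg_carrier A. cg_mul A (cg_one A) x = x \<and> cg_mul A x (cg_one A) = x) \<and>
    (\<forall>x\<in>cg_carrier A. \<forall>y\<in>cg_carrier A. \<forall>z\<in>cg_carrier A.
        cg_mul A x (cg_add A y z) = cg_add A (cg_mul A x y) (cg_mul A x z) \<and>
        cg_mul A (cg_add A y z) x = cg_add A (cg_mul A y x) (cg_mul A z x)) \<and>
    (\<forall>a. \<forall>x\<in>cg_carrier A. \<forall>y\<in>cg_carrier A.
        cg_mul A (cg_smult A a x) y = cg_smult A a (cg_mul A x y) \<and>
        cg_mul A x (cg_smult A a y) = cg_smult A a (cg_mul A x y)) \<and>
    cg_one A \<in> cg_hom A 0 \<and>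
    (\<forall>i j. \<forall>x\<in>cg_hom A i. \<forall>y\<in>cg_hom A j. cg_mul A x y \<in> cg_hom A (i + j)) \<and>
    \<comment> \<open>graded commutativity\<close>
    (\<forall>i j. \<forall>x\<in>cg_hom A i. \<forall>y\<in>cg_hom A j.
        cg_mul A x y = cg_smult A ((-1) ^ (i * j)) (cg_mul A y x)) \<and>
    \<comment> \<open>differential: linear, degree +1, graded Leibniz rule, d squared = 0\<close>
    (\<forall>x\<in>cg_carrier A. \<forall>y\<in>cg_carrier A. cg_diff A (cg_add A x y) = cg_add A (cg_diff A x) (cg_diff A y)) \<and>
    (\<forall>a. \<forall>x\<in>cg_carrier A. cg_diff A (cg_smult A a x) = cg_smult A a (cg_diff A x)) \<and>
    (\<forall>i. \<forall>x\<in>cg_hom A i. cg_diff A x \<in> cg_hom A (Suc i)) \<and>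
    (\<forall>i. \<forall>x\<in>cg_hom A i. \<forall>y\<in>cg_carrier A.
        cg_diff A (cg_mul A x y) =
          cg_add A (cg_mul A (cg_diff A x) y) (cg_smult A ((-1) ^ i) (cg_mul A x (cg_diff A y)))) \<and>
    (\<forall>x\<in>cg_carrier A. cg_diff A (cg_diff A x) = cg_zero A)"

text \<open>A^0 = k (the unit map k \<rightarrow> A^0 is an isomorphism).\<close>
definition cg_connected :: "('a, 'k::field) cdga \<Rightarrow> bool" where
  "cg_connected A \<longleftrightarrow> cg_one A \<noteq> cg_zero A \<and> cg_hom A 0 = range (\<lambda>c. cg_smult A c (cg_one A))"

definition cdga_hom :: "('a, 'k::field) cdga \<Rightarrow> ('b, 'k) cdga \<Rightarrow> ('a \<Rightarrow> 'b) \<Rightarrow> bool" where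
  "cdga_hom A B f \<longleftrightarrow>
    (\<forall>x\<in>cg_carrier A. f x \<in> cg_carrier B) \<and>
    (\<forall>i. \<forall>x\<in>cg_hom A i. f x \<in> cg_hom B i) \<and>
    (\<forall>x\<in>cg_carrier A. \<forall>y\<in>cg_carrier A. f (cg_add A x y) = cg_add B (f x) (f y)) \<and>
    (\<forall>a. \<forall>x\<in>cg_carrier A. f (cg_smult A a x) = cg_smult B a (f x)) \<and>
    (\<forall>x\<in>cg_carrier A. \<forall>y\<in>cg_carrier A. f (cg_mul A x y) = cg_mul B (f x) (f y)) \<and>
    f (cg_one A) = cg_one B \<and>
    (\<forall>x\<in>cg_carrier A. f (cg_diff A x) = cg_diff B (f x))"

definition cocycle :: "('a, 'k) cdga \<Rightarrow> nat \<Rightarrow> 'a \<Rightarrow> bool" where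
  "cocycle A i x \<longleftrightarrow> x \<in> cg_hom A i \<and> cg_diff A x = cg_zero A"

definition coboundary :: "('a, 'k) cdga \<Rightarrow> nat \<Rightarrow> 'a \<Rightarrow> bool" where
  "coboundary A i x \<longleftrightarrow> x = cg_zero A \<or> (\<exists>j y. Suc j = i \<and> y \<in> cg_hom A j \<and> x = cg_diff A y)"

text \<open>A morphism inducing, in every degree i, a bijection
  H^i(A) = Z^i(A)/B^i(A) \<rightarrow> H^i(B) (injectivity and surjectivity spelled out).\<close>
definition quasi_iso :: "('a, 'k::field) cdga \<Rightarrow> ('b, 'k) cdga \<Rightarrow> ('a \<Rightarrow> 'b) \<Rightarrow> bool" where
  "quasi_iso A B f \<longleftrightarrow> cdga_hom A B f \<and>
    (\<forall>i. (\<forall>z. cocycle A i z \<longrightarrow> coboundary B i (f z) \<longrightarrow> coboundary A i z) \<and>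
         (\<forall>w. cocycle B i w \<longrightarrow> (\<exists>z. cocycle A i z \<and> coboundary B i (cg_sub B (f z) w))))"

inductive_set subalg :: "('a, 'k::field) cdga \<Rightarrow> 'a set \<Rightarrow> 'a set" for A G where
  sa_one: "cg_one A \<in> subalg A G"
| sa_gen: "x \<in> G \<Longrightarrow> x \<in> subalg A G"
| sa_add: "x \<in> subalg A G \<Longrightarrow> y \<in> subalg A G \<Longrightarrow> cg_add A x y \<in> subalg A G"
| sa_smult: "x \<in> subalg A G \<Longrightarrow> cg_smult A c x \<in> subalg A G"
| sa_mul: "x \<in> subalg A G \<Longrightarrow> y \<in> subalg A G \<Longrightarrow> cg_mul A x y \<in> subalg A G"

text \<open>For V concentrated in degree 1 (and char k \<noteq> 2) this is the exterior algebra.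
  An element is a finitely supported family of coefficients c S, indexed by the finite
  subsets S of I; the basis vector for S = {\<tau>1 < ... < \<tau>n} is x_\<tau>1 ... x_\<tau>n.\<close>

definition ext_sign :: "'i::linorder set \<Rightarrow> 'i set \<Rightarrow> 'k::field" where
  "ext_sign S T = (-1) ^ card {(s, t). s \<in> S \<and> t \<in> T \<and> t < s}"

definition ext_carrier :: "'i set \<Rightarrow> ('i set \<Rightarrow> 'k::field) set" where
  "ext_carrier I = {c. finite {S. c S \<noteq> 0} \<and> (\<forall>S. c S \<noteq> 0 \<longrightarrow> finite S \<and> S \<subseteq> I)}"

definition ext_mul :: "('i::linorder set \<Rightarrow> 'k::field) \<Rightarrow> ('i set \<Rightarrow> 'k) \<Rightarrow> 'i set \<Rightarrow> 'k" where
  "ext_mul a b U = (\<Sum>S\<in>Pow U. a S * b (U - S) * ext_sign S (U - S))"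

definition ext_alg :: "'i::linorder set \<Rightarrow> (('i set \<Rightarrow> 'k::field) \<Rightarrow> ('i set \<Rightarrow> 'k))
    \<Rightarrow> ('i set \<Rightarrow> 'k, 'k) cdga" where
  "ext_alg I D = \<lparr> cg_carrier = ext_carrier I,
                   cg_hom = (\<lambda>n. {c \<in> ext_carrier I. \<forall>S. c S \<noteq> 0 \<longrightarrow> card S = n}),
                   cg_zero = (\<lambda>S. 0),
                   cg_add = (\<lambda>a b S. a S + b S),
                   cg_smult = (\<lambda>k a S. k * a S),
                   cg_mul = ext_mul,
                   cg_one = (\<lambda>S. if S = {} then 1 else 0),
                   cg_diff = D \<rparr>"

definition ext_gen :: "'i \<Rightarrow> 'i set \<Rightarrow> 'k::field" where
  "ext_gen \<tau> = (\<lambda>S. if S = {\<tau>} then 1 else 0)"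

text \<open>(\<and>V, d) with V = V^1 spanned by (x_\<tau>)_{\<tau>\<in>I}, I well-ordered, is a minimal algebra:
  it is a CDGA and each d x_\<tau> lies in the subalgebra generated by the x_\<mu>, \<mu> < \<tau>.
  (The degree condition on the ordering is vacuous since all generators have degree 1.)\<close>
definition minimal_deg1 :: "'i::wellorder set \<Rightarrow> (('i set \<Rightarrow> 'k::field) \<Rightarrow> ('i set \<Rightarrow> 'k)) \<Rightarrow> bool" where
  "minimal_deg1 I D \<longleftrightarrow> cdga (ext_alg I D) \<and>
     (\<forall>\<tau>\<in>I. D (ext_gen \<tau>) \<in> subalg (ext_alg I D) (ext_gen ` {\<mu>\<in>I. \<mu> < \<tau>}))"

end

theory Submission
  imports Defs "HOL-Algebra.Ring"
begin

(*
  A morphism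
  g : \<and>V \<rightarrow> B is the same as a choice of degree-1 elements b_\<tau> = g(x_\<tau>) of B with
  d b_\<tau> = g(d x_\<tau>); here g is "evaluation at b": x_S \<mapsto> b_S (ordered products, whose signs
  are governed by b_\<tau>^2 = 0 in characteristic \<noteq> 2).  The b_\<tau> are chosen by well-founded
  recursion on I.  Since d x_\<tau> involves only earlier generators, the evaluation of d x_\<tau> is
  already defined; it is a 2-cocycle of B mapped by \<psi> to the exact element d f(x_\<tau>), so the
  quasi-isomorphism property of \<psi> together with A^0 = k gives b_\<tau> with d b_\<tau> = g(d x_\<tau>)
  and \<psi>(b_\<tau>) = f(x_\<tau>) exactly.  Finally g is a quasi-isomorphism whenever f is, by the
  two-out-of-three property.
*)

text \<open>Forgetting grading, scalars and differential, a CDGA is a ring; this gives access to the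
  finite sums of HOL-Algebra.\<close>

definition ring_of :: "('a, 'k) cdga \<Rightarrow> 'a ring" where
  "ring_of A = \<lparr>carrier = cg_carrier A, monoid.mult = cg_mul A, one = cg_one A,
                zero = cg_zero A, add = cg_add A\<rparr>"

lemma ring_of_simps[simp]:
  "carrier (ring_of A) = cg_carrier A" "monoid.mult (ring_of A) = cg_mul A"
  "one (ring_of A) = cg_one A" "zero (ring_of A) = cg_zero A" "add (ring_of A) = cg_add A"
  by (simp_all add: ring_of_def)

locale cdga_struct =
  fixes A :: "('a, 'k::field) cdga"
  assumes cdga: "cdga A"
begin

text \<open>The defining conditions of a CDGA, grouped by kind and then turned into rules.\<close>

lemma closure_axioms:
  "cg_zero A \<in> cg_carrier A" "cg_one A \<in> cg_carrier A"
  "\<forall>x\<in>cg_carrier A. \<forall>y\<in>cg_carrier A. cg_add A x y \<in> cg_carrier A"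
  "\<forall>c. \<forall>x\<in>cg_carrier A. cg_smult A c x \<in> cg_carrier A"
  "\<forall>x\<in>cg_carrier A. \<forall>y\<in>cg_carrier A. cg_mul A x y \<in> cg_carrier A"
  "\<forall>x\<in>cg_carrier A. cg_diff A x \<in> cg_carrier A"
  by (insert cdga[unfolded cdga_def], (elim conjE, assumption)+)

lemma vector_space_axioms:
  "\<forall>x\<in>cg_carrier A. \<forall>y\<in>cg_carrier A. \<forall>z\<in>cg_carrier A.
     cg_add A (cg_add A x y) z = cg_add A x (cg_add A y z)"
  "\<forall>x\<in>cg_carrier A. \<forall>y\<in>cg_carrier A. cg_add A x y = cg_add A y x"
  "\<forall>x\<in>cg_carrier A. cg_add A (cg_zero A) x = x"
  "\<forall>x\<in>cg_carrier A. cg_add A x (cg_smult A (-1) x) = cg_zero A"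
  "\<forall>a b. \<forall>x\<in>cg_carrier A. cg_smult A (a * b) x = cg_smult A a (cg_smult A b x)"
  "\<forall>x\<in>cg_carrier A. cg_smult A 1 x = x"
  "\<forall>a b. \<forall>x\<in>cg_carrier A. cg_smult A (a + b) x = cg_add A (cg_smult A a x) (cg_smult A b x)"
  "\<forall>a. \<forall>x\<in>cg_carrier A. \<forall>y\<in>cg_carrier A.
     cg_smult A a (cg_add A x y) = cg_add A (cg_smult A a x) (cg_smult A a y)"
  by (insert cdga[unfolded cdga_def], (elim conjE, assumption)+)

lemma grading_axioms:
  "\<forall>i. cg_hom A i \<subseteq> cg_carrier A \<and> cg_zero A \<in> cg_hom A i \<and>
     (\<forall>x\<in>cg_hom A i. \<forall>y\<in>cg_hom A i. cg_add A x y \<in> cg_hom A i) \<and>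
     (\<forall>c. \<forall>x\<in>cg_hom A i. cg_smult A c x \<in> cg_hom A i)"
  "cg_one A \<in> cg_hom A 0"
  "\<forall>i j. \<forall>x\<in>cg_hom A i. \<forall>y\<in>cg_hom A j. cg_mul A x y \<in> cg_hom A (i + j)"
  "\<forall>i j. \<forall>x\<in>cg_hom A i. \<forall>y\<in>cg_hom A j.
     cg_mul A x y = cg_smult A ((-1) ^ (i * j)) (cg_mul A y x)"
  by (insert cdga[unfolded cdga_def], (elim conjE, assumption)+)

lemma algebra_axioms:
  "\<forall>x\<in>cg_carrier A. \<forall>y\<in>cg_carrier A. \<forall>z\<in>cg_carrier A.
     cg_mul A (cg_mul A x y) z = cg_mul A x (cg_mul A y z)"
  "\<forall>x\<in>cg_carrier A. cg_mul A (cg_one A) x = x \<and> cg_mul A x (cg_one A) = x"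
  "\<forall>x\<in>cg_carrier A. \<forall>y\<in>cg_carrier A. \<forall>z\<in>cg_carrier A.
     cg_mul A x (cg_add A y z) = cg_add A (cg_mul A x y) (cg_mul A x z) \<and>
     cg_mul A (cg_add A y z) x = cg_add A (cg_mul A y x) (cg_mul A z x)"
  "\<forall>a. \<forall>x\<in>cg_carrier A. \<forall>y\<in>cg_carrier A.
     cg_mul A (cg_smult A a x) y = cg_smult A a (cg_mul A x y) \<and>
     cg_mul A x (cg_smult A a y) = cg_smult A a (cg_mul A x y)"
  by (insert cdga[unfolded cdga_def], (elim conjE, assumption)+)

lemma differential_axioms:
  "\<forall>x\<in>cg_carrier A. \<forall>y\<in>cg_carrier A.
     cg_diff A (cg_add A x y) = cg_add A (cg_diff A x) (cg_diff A y)"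
  "\<forall>a. \<forall>x\<in>cg_carrier A. cg_diff A (cg_smult A a x) = cg_smult A a (cg_diff A x)"
  "\<forall>i. \<forall>x\<in>cg_hom A i. cg_diff A x \<in> cg_hom A (Suc i)"
  "\<forall>i. \<forall>x\<in>cg_hom A i. \<forall>y\<in>cg_carrier A.
     cg_diff A (cg_mul A x y) =
       cg_add A (cg_mul A (cg_diff A x) y) (cg_smult A ((-1) ^ i) (cg_mul A x (cg_diff A y)))"
  "\<forall>x\<in>cg_carrier A. cg_diff A (cg_diff A x) = cg_zero A"
  by (insert cdga[unfolded cdga_def], (elim conjE, assumption)+)

lemmas zero_c[simp] = closure_axioms(1)
lemmas one_c[simp] = closure_axioms(2)
lemmas add_c[simp] = closure_axioms(3)[rule_format]
lemmas sm_c[simp] = closure_axioms(4)[rule_format]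
lemmas mul_c[simp] = closure_axioms(5)[rule_format]
lemmas d_c[simp] = closure_axioms(6)[rule_format]

lemmas add_assoc = vector_space_axioms(1)[rule_format]
lemmas add_comm = vector_space_axioms(2)[rule_format]
lemmas add_zero[simp] = vector_space_axioms(3)[rule_format]
lemmas add_neg = vector_space_axioms(4)[rule_format]
lemmas sm_sm = vector_space_axioms(5)[rule_format, symmetric]
lemmas sm_one[simp] = vector_space_axioms(6)[rule_format]
lemmas sm_addk = vector_space_axioms(7)[rule_format]
lemmas sm_add = vector_space_axioms(8)[rule_format]

lemma hom_c: "x \<in> cg_hom A i \<Longrightarrow> x \<in> cg_carrier A"
  and hom_zero[simp]: "cg_zero A \<in> cg_hom A i"
  and hom_add[simp]: "x \<in> cg_hom A i \<Longrightarrow> y \<in> cg_hom A i \<Longrightarrow> cg_add A x y \<in> cg_hom A i"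
  and hom_sm[simp]: "x \<in> cg_hom A i \<Longrightarrow> cg_smult A c x \<in> cg_hom A i"
  using grading_axioms(1) by blast+

lemmas one_hom[simp] = grading_axioms(2)
lemmas hom_mul = grading_axioms(3)[rule_format]
lemmas gcomm = grading_axioms(4)[rule_format]

lemmas mul_assoc = algebra_axioms(1)[rule_format]
lemmas mul_one[simp] = algebra_axioms(2)[rule_format, THEN conjunct1]
  algebra_axioms(2)[rule_format, THEN conjunct2]
lemmas distr = algebra_axioms(3)[rule_format, THEN conjunct1]
  algebra_axioms(3)[rule_format, THEN conjunct2]
lemmas mul_sm = algebra_axioms(4)[rule_format, THEN conjunct1]
  algebra_axioms(4)[rule_format, THEN conjunct2]

lemmas d_add = differential_axioms(1)[rule_format]
lemmas d_sm = differential_axioms(2)[rule_format]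
lemmas d_hom = differential_axioms(3)[rule_format]
lemmas leibniz = differential_axioms(4)[rule_format]
lemmas dd[simp] = differential_axioms(5)[rule_format]

lemma ring: "ring (ring_of A)"
proof (rule ringI)
  show "abelian_group (ring_of A)"
  proof (rule abelian_groupI)
    fix x assume x: "x \<in> carrier (ring_of A)"
    show "\<exists>y\<in>carrier (ring_of A). y \<oplus>\<^bsub>ring_of A\<^esub> x = \<zero>\<^bsub>ring_of A\<^esub>"
      using x add_neg[of x] add_comm[of x "cg_smult A (-1) x"]
      by (intro bexI[of _ "cg_smult A (-1) x"]) auto
  qed (auto simp: add_assoc intro: add_comm)
  show "monoid (ring_of A)"
    by (rule monoidI) (auto simp: mul_assoc)
qed (auto simp: distr)

sublocale R: ring "ring_of A"
  rewrites "carrier (ring_of A) = cg_carrier A" and "monoid.mult (ring_of A) = cg_mul A"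
  and "one (ring_of A) = cg_one A" and "zero (ring_of A) = cg_zero A" and "add (ring_of A) = cg_add A"
  by (rule ring) simp_all

lemma neg_eq: "x \<in> cg_carrier A \<Longrightarrow> cg_smult A (-1) x = a_inv (ring_of A) x"
  using R.minus_equality[of "cg_smult A (-1) x" x] add_neg[of x] add_comm[of x "cg_smult A (-1) x"]
  by simp

lemma sm_zerok[simp]: "x \<in> cg_carrier A \<Longrightarrow> cg_smult A 0 x = cg_zero A"
proof -
  assume x: "x \<in> cg_carrier A"
  have "cg_smult A 0 x = cg_add A (cg_smult A 0 x) (cg_smult A 0 x)"
    using sm_addk[of x 0 0] x by simp
  then show ?thesis using R.add.l_cancel_one'[of "cg_smult A 0 x" "cg_smult A 0 x"] x by simp
qed

lemma sm_zero[simp]: "cg_smult A c (cg_zero A) = cg_zero A"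
  using sm_sm[of "cg_zero A" c 0] by simp

lemma add_zero_r[simp]: "x \<in> cg_carrier A \<Longrightarrow> cg_add A x (cg_zero A) = x"
  by (simp add: add_comm)

lemma d_zero[simp]: "cg_diff A (cg_zero A) = cg_zero A"
  using d_sm[of "cg_zero A" 0] by simp

(* The Leibniz rule forces d 1 = 0. *)
lemma d_one[simp]: "cg_diff A (cg_one A) = cg_zero A"
proof -
  have "cg_diff A (cg_one A) = cg_add A (cg_diff A (cg_one A)) (cg_diff A (cg_one A))"
    using leibniz[OF one_hom one_c] by simp
  then show ?thesis
    using R.add.l_cancel_one'[of "cg_diff A (cg_one A)" "cg_diff A (cg_one A)"] by simp
qed

lemma sub_c[simp]: "x \<in> cg_carrier A \<Longrightarrow> y \<in> cg_carrier A \<Longrightarrow> cg_sub A x y \<in> cg_carrier A"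
  by (simp add: cg_sub_def)

lemma sub_hom[simp]: "x \<in> cg_hom A i \<Longrightarrow> y \<in> cg_hom A i \<Longrightarrow> cg_sub A x y \<in> cg_hom A i"
  by (simp add: cg_sub_def)

lemma sub_zero_r[simp]: "x \<in> cg_carrier A \<Longrightarrow> cg_sub A x (cg_zero A) = x"
  by (simp add: cg_sub_def)

lemma sub_eq_minus: "x \<in> cg_carrier A \<Longrightarrow> y \<in> cg_carrier A \<Longrightarrow> cg_sub A x y = x \<ominus>\<^bsub>ring_of A\<^esub> y"
  by (simp add: cg_sub_def neg_eq a_minus_def)

lemma d_sub: "x \<in> cg_carrier A \<Longrightarrow> y \<in> cg_carrier A \<Longrightarrow>
    cg_diff A (cg_sub A x y) = cg_sub A (cg_diff A x) (cg_diff A y)"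
  by (simp add: cg_sub_def d_add d_sm)

lemma sub_zero_iff: "x \<in> cg_carrier A \<Longrightarrow> y \<in> cg_carrier A \<Longrightarrow> cg_sub A x y = cg_zero A \<longleftrightarrow> x = y"
  by (simp add: sub_eq_minus R.minus_eq)
     (metis R.add.inv_closed R.minus_equality R.minus_minus R.r_neg R.a_comm)

lemma coboundary1_zero:
  assumes "cg_connected A" "coboundary A 1 v"
  shows "v = cg_zero A"
proof -
  have "cg_diff A y = cg_zero A" if y: "y \<in> cg_hom A 0" for y
  proof -
    obtain c where "y = cg_smult A c (cg_one A)"
      using y assms(1) unfolding cg_connected_def by auto
    then show ?thesis by (simp add: d_sm)
  qed
  then show ?thesis using assms(2) unfolding coboundary_def by auto
qed

lemma finsum_in_subspace:
  assumes "V \<subseteq> cg_carrier A" "cg_zero A \<in> V" "\<And>x y. x \<in> V \<Longrightarrow> y \<in> V \<Longrightarrow> cg_add A x y \<in> V"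
    and "finite F" "\<phi> \<in> F \<rightarrow> V"
  shows "finsum (ring_of A) \<phi> F \<in> V"
  using assms(4,5)
proof (induction F rule: finite_induct)
  case empty then show ?case using assms by simp
next
  case (insert x F)
  have "\<phi> \<in> F \<rightarrow> cg_carrier A" "\<phi> x \<in> cg_carrier A" using insert.prems assms(1) by auto
  then show ?case using insert assms by (auto simp: R.finsum_insert)
qed

lemma hom_finsum: "finite F \<Longrightarrow> \<phi> \<in> F \<rightarrow> cg_hom A n \<Longrightarrow> finsum (ring_of A) \<phi> F \<in> cg_hom A n"
  by (rule finsum_in_subspace) (auto dest: hom_c)

lemma sm_finsum: "finite F \<Longrightarrow> \<phi> \<in> F \<rightarrow> cg_carrier A \<Longrightarrow>
    cg_smult A c (finsum (ring_of A) \<phi> F) = finsum (ring_of A) (\<lambda>i. cg_smult A c (\<phi> i)) F"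
proof (induction F rule: finite_induct)
  case empty then show ?case by simp
next
  case (insert x F)
  then have "\<phi> \<in> F \<rightarrow> cg_carrier A" "\<phi> x \<in> cg_carrier A"
    "(\<lambda>i. cg_smult A c (\<phi> i)) \<in> F \<rightarrow> cg_carrier A" by (auto simp: Pi_iff)
  with insert show ?case by (simp add: R.finsum_insert sm_add)
qed

end

lemma additive_finsum:
  assumes "cdga A" "cdga B" "V \<subseteq> cg_carrier A" "cg_zero A \<in> V"
    and "\<And>x y. x \<in> V \<Longrightarrow> y \<in> V \<Longrightarrow> cg_add A x y \<in> V"
    and "\<And>x. x \<in> V \<Longrightarrow> h x \<in> cg_carrier B" "h (cg_zero A) = cg_zero B"
    and "\<And>x y. x \<in> V \<Longrightarrow> y \<in> V \<Longrightarrow> h (cg_add A x y) = cg_add B (h x) (h y)"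
    and "finite F" "\<phi> \<in> F \<rightarrow> V"
  shows "h (finsum (ring_of A) \<phi> F) = finsum (ring_of B) (\<lambda>i. h (\<phi> i)) F"
proof -
  interpret a: cdga_struct A by (rule cdga_struct.intro) fact
  interpret b: cdga_struct B by (rule cdga_struct.intro) fact
  show ?thesis
    using assms(9,10)
  proof (induction F rule: finite_induct)
    case empty
    then show ?case using assms(7) by simp
  next
    case (insert x F)
    have V: "\<phi> \<in> F \<rightarrow> V" "\<phi> x \<in> V" using insert.prems by auto
    then have "\<phi> \<in> F \<rightarrow> cg_carrier A" "\<phi> x \<in> cg_carrier A"
      "(\<lambda>i. h (\<phi> i)) \<in> F \<rightarrow> cg_carrier B" "h (\<phi> x) \<in> cg_carrier B"
      "finsum (ring_of A) \<phi> F \<in> V"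
      using assms(3,6) a.finsum_in_subspace[OF assms(3-5) insert.hyps(1)] by auto
    with insert V show ?case by (simp add: a.R.finsum_insert b.R.finsum_insert assms(8))
  qed
qed

lemma cdga_homD:
  assumes "cdga_hom A B h"
  shows "x \<in> cg_carrier A \<Longrightarrow> h x \<in> cg_carrier B"
    and "x \<in> cg_hom A i \<Longrightarrow> h x \<in> cg_hom B i"
    and "x \<in> cg_carrier A \<Longrightarrow> y \<in> cg_carrier A \<Longrightarrow> h (cg_add A x y) = cg_add B (h x) (h y)"
    and "x \<in> cg_carrier A \<Longrightarrow> h (cg_smult A a x) = cg_smult B a (h x)"
    and "x \<in> cg_carrier A \<Longrightarrow> y \<in> cg_carrier A \<Longrightarrow> h (cg_mul A x y) = cg_mul B (h x) (h y)"
    and "h (cg_one A) = cg_one B"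
    and "x \<in> cg_carrier A \<Longrightarrow> h (cg_diff A x) = cg_diff B (h x)"
  using assms unfolding cdga_hom_def by blast+

lemma cdga_hom_zero:
  assumes "cdga A" "cdga B" "cdga_hom A B h"
  shows "h (cg_zero A) = cg_zero B"
proof -
  interpret a: cdga_struct A by (rule cdga_struct.intro) fact
  interpret b: cdga_struct B by (rule cdga_struct.intro) fact
  have "h (cg_zero A) = h (cg_smult A 0 (cg_zero A))" by simp
  also have "\<dots> = cg_smult B 0 (h (cg_zero A))" using cdga_homD(4)[OF assms(3) a.zero_c] .
  also have "\<dots> = cg_zero B" using cdga_homD(1)[OF assms(3)] by simp
  finally show ?thesis .
qed

lemma cdga_hom_sub:
  assumes "cdga A" "cdga B" "cdga_hom A B h" "x \<in> cg_carrier A" "y \<in> cg_carrier A"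
  shows "h (cg_sub A x y) = cg_sub B (h x) (h y)"
  using assms cdga_homD(3,4)[OF assms(3)] cdga_struct.sm_c[OF cdga_struct.intro]
  unfolding cg_sub_def by metis

lemma cdga_hom_cocycle:
  assumes "cdga A" "cdga B" "cdga_hom A B h" "cocycle A i z"
  shows "cocycle B i (h z)"
  using assms(4) cdga_homD(2,7)[OF assms(3)] cdga_hom_zero[OF assms(1-3)]
    cdga_struct.hom_c[OF cdga_struct.intro[OF assms(1)]]
  unfolding cocycle_def by metis

lemma cdga_hom_coboundary:
  assumes "cdga A" "cdga B" "cdga_hom A B h" "coboundary A i v"
  shows "coboundary B i (h v)"
  using assms(4) cdga_homD(2,7)[OF assms(3)] cdga_hom_zero[OF assms(1-3)]
    cdga_struct.hom_c[OF cdga_struct.intro[OF assms(1)]]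
  unfolding coboundary_def by metis

lemma quasi_iso_cancel_left:
  assumes E: "cdga E" and A: "cdga A" and B: "cdga B"
    and g: "cdga_hom E B g" and \<psi>: "quasi_iso B A \<psi>" and f: "quasi_iso E A f"
    and comm: "\<forall>x\<in>cg_carrier E. \<psi> (g x) = f x"
  shows "quasi_iso E B g"
proof -
  interpret e: cdga_struct E by (rule cdga_struct.intro) fact
  interpret b: cdga_struct B by (rule cdga_struct.intro) fact
  have h\<psi>: "cdga_hom B A \<psi>" using \<psi> by (simp add: quasi_iso_def)
  have fz: "\<psi> (g z) = f z" if "cocycle E i z" for i z
    using that e.hom_c comm by (auto simp: cocycle_def)
  show ?thesis
    unfolding quasi_iso_def
  proof (intro conjI allI impI g)
    (* injectivity: a class killed by g is killed by f *)
    fix i z assume z: "cocycle E i z" and cb: "coboundary B i (g z)"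
    have "coboundary A i (f z)" using cdga_hom_coboundary[OF B A h\<psi> cb] fz[OF z] by simp
    then show "coboundary E i z" using f z unfolding quasi_iso_def by blast
  next
    (* surjectivity: for a class [w] of B, f z \<sim> \<psi> w gives \<psi> (g z - w) \<sim> 0, so g z \<sim> w *)
    fix i w assume w: "cocycle B i w"
    obtain z where z: "cocycle E i z" "coboundary A i (cg_sub A (f z) (\<psi> w))"
      using f cdga_hom_cocycle[OF B A h\<psi> w] unfolding quasi_iso_def by blast
    have gz: "cocycle B i (g z)" by (rule cdga_hom_cocycle[OF E B g z(1)])
    have wC: "w \<in> cg_carrier B" and gzC: "g z \<in> cg_carrier B"
      using w gz b.hom_c by (auto simp: cocycle_def)
    have "cocycle B i (cg_sub B (g z) w)"
      using gz w b.d_sub[OF gzC wC] by (simp add: cocycle_def)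
    moreover have "\<psi> (cg_sub B (g z) w) = cg_sub A (f z) (\<psi> w)"
      using cdga_hom_sub[OF B A h\<psi> gzC wC] fz[OF z(1)] by simp
    ultimately have "coboundary B i (cg_sub B (g z) w)"
      using \<psi> z(2) unfolding quasi_iso_def by simp
    then show "\<exists>z. cocycle E i z \<and> coboundary B i (cg_sub B (g z) w)" using z(1) by blast
  qed
qed

text \<open>First u = d \<beta>0 by injectivity on H^2; then
  \<psi> \<beta>0 - a is a 1-cocycle, hence (surjectivity on H^1, no 1-coboundaries in A)
  equal to \<psi> z for a 1-cocycle z, and \<beta> = \<beta>0 - z works.\<close>

lemma quasi_iso_lift_degree1:
  assumes A: "cdga A" and B: "cdga B" and conn: "cg_connected A" and \<psi>: "quasi_iso B A \<psi>"
    and u: "cocycle B 2 u" and a: "a \<in> cg_hom A 1" and \<psi>u: "\<psi> u = cg_diff A a"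
  obtains \<beta> where "\<beta> \<in> cg_hom B 1" "\<psi> \<beta> = a" "cg_diff B \<beta> = u"
proof -
  interpret a: cdga_struct A by (rule cdga_struct.intro) fact
  interpret b: cdga_struct B by (rule cdga_struct.intro) fact
  have h\<psi>: "cdga_hom B A \<psi>" using \<psi> by (simp add: quasi_iso_def)
  have aC: "a \<in> cg_carrier A" using a a.hom_c by blast
  have "coboundary A 2 (\<psi> u)"
    unfolding coboundary_def using \<psi>u a by (auto simp: numeral_2_eq_2)
  then have "coboundary B 2 u" using \<psi> u unfolding quasi_iso_def by blast
  then obtain \<beta>0 where b0: "\<beta>0 \<in> cg_hom B 1" "cg_diff B \<beta>0 = u"
    unfolding coboundary_def by (metis b.d_zero b.hom_zero One_nat_def Suc_1 Suc_inject)
  have b0C: "\<beta>0 \<in> cg_carrier B" using b0(1) b.hom_c by blast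
  have \<psi>b0C: "\<psi> \<beta>0 \<in> cg_carrier A" using cdga_homD(1)[OF h\<psi> b0C] .
  define w where "w = cg_sub A (\<psi> \<beta>0) a"
  have wC: "w \<in> cg_carrier A" using \<psi>b0C aC by (simp add: w_def)
  have "cg_diff A w = cg_sub A (\<psi> (cg_diff B \<beta>0)) (cg_diff A a)"
    using a.d_sub[OF \<psi>b0C aC] cdga_homD(7)[OF h\<psi> b0C] by (simp add: w_def)
  then have "cocycle A 1 w"
    using b0(2) \<psi>u a cdga_homD(2)[OF h\<psi> b0(1)] a.sub_zero_iff[of "cg_diff A a" "cg_diff A a"] aC
    by (simp add: cocycle_def w_def)
  then obtain z where z: "cocycle B 1 z" "coboundary A 1 (cg_sub A (\<psi> z) w)"
    using \<psi> unfolding quasi_iso_def by blast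
  have zh: "z \<in> cg_hom B 1" and dz: "cg_diff B z = cg_zero B" using z(1) by (auto simp: cocycle_def)
  have zC: "z \<in> cg_carrier B" using zh b.hom_c by blast
  have \<psi>zC: "\<psi> z \<in> cg_carrier A" using cdga_homD(1)[OF h\<psi> zC] .
  have \<psi>z: "\<psi> z = w"
    using a.coboundary1_zero[OF conn z(2)] a.sub_zero_iff[OF \<psi>zC wC] by simp
  show ?thesis
  proof
    show "cg_sub B \<beta>0 z \<in> cg_hom B 1" using b0(1) zh by simp
    have "u \<in> cg_carrier B" using u b.hom_c by (auto simp: cocycle_def)
    then show "cg_diff B (cg_sub B \<beta>0 z) = u" using b.d_sub[OF b0C zC] b0(2) dz by simp
    have "\<psi> (cg_sub B \<beta>0 z) = cg_sub A (\<psi> \<beta>0) (cg_sub A (\<psi> \<beta>0) a)"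
      using cdga_hom_sub[OF B A h\<psi> b0C zC] \<psi>z by (simp add: w_def)
    also have "\<dots> = a"
      using \<psi>b0C aC by (simp add: a.sub_eq_minus a.R.minus_eq a.R.minus_add a.R.a_ac a.R.r_neg)
    finally show "\<psi> (cg_sub B \<beta>0 z) = a" .
  qed
qed

text \<open>For finite S, T \<subseteq> I the product of the basis
  monomials x_S x_T is wedge_sign S T times x_{S \<union> T}, and multiplying x_W from the left by
  the generator x_s gives insert_sign s W times x_{W \<union> {s}}.\<close>

definition wedge_sign :: "'i::linorder set \<Rightarrow> 'i set \<Rightarrow> 'k::field" where
  "wedge_sign S T = (if S \<inter> T = {} then ext_sign S T else 0)"

definition insert_sign :: "'i::linorder \<Rightarrow> 'i set \<Rightarrow> 'k::field" where
  "insert_sign s W = (if s \<in> W then 0 else (-1) ^ card {w\<in>W. w < s})"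

lemma insert_sign_least:
  assumes "\<forall>w\<in>W. s < w"
  shows "(insert_sign s W :: 'k::field) = 1"
proof -
  have "s \<notin> W" "{w \<in> W. w < s} = {}" using assms by force+
  then show ?thesis unfolding insert_sign_def by (simp only: if_False card.empty power_0)
qed

lemma insert_sign_mem: "s \<in> W \<Longrightarrow> (insert_sign s W :: 'k::field) = 0"
  by (simp add: insert_sign_def)

lemma insert_sign_insert_less:
  assumes "finite W" "w < s" "w \<notin> W"
  shows "(insert_sign s (insert w W) :: 'k::field) = - insert_sign s W"
proof -
  have "{y \<in> insert w W. y < s} = insert w {y \<in> W. y < s}" using assms(2) by auto
  then show ?thesis using assms by (simp add: insert_sign_def)
qed

lemma wedge_sign_insert:
  assumes "finite X" "finite T" "s \<notin> X" "\<forall>x\<in>X. s < x"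
  shows "(wedge_sign (insert s X) T :: 'k::field) = wedge_sign X T * insert_sign s (X \<union> T)"
proof (cases "s \<in> T")
  case True then show ?thesis by (auto simp: wedge_sign_def insert_sign_def)
next
  case False
  show ?thesis
  proof (cases "X \<inter> T = {}")
    case False then show ?thesis by (auto simp: wedge_sign_def)
  next
    case True
    let ?P = "{(a, t). a \<in> insert s X \<and> t \<in> T \<and> t < a}"
    let ?PX = "{(a, t). a \<in> X \<and> t \<in> T \<and> t < a}"
    let ?Q = "Pair s ` {t \<in> T. t < s}"
    have "?P = ?PX \<union> ?Q" by auto
    moreover have "?PX \<inter> ?Q = {}" using assms(3) by auto
    moreover have "finite ?PX" by (rule finite_subset[of _ "X \<times> T"]) (use assms in auto)
    moreover have "finite ?Q" using assms by auto
    ultimately have c: "card ?P = card ?PX + card ?Q" by (simp add: card_Un_disjoint)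
    have "card ?Q = card {t \<in> T. t < s}" by (rule card_image) (auto simp: inj_on_def)
    moreover have "{w \<in> X \<union> T. w < s} = {t \<in> T. t < s}" using assms(4) by auto
    ultimately show ?thesis using c True False assms(3)
      by (simp add: wedge_sign_def insert_sign_def ext_sign_def power_add)
  qed
qed

definition ext_mono :: "'i set \<Rightarrow> 'i set \<Rightarrow> 'k::field" where
  "ext_mono S = (\<lambda>U. if U = S then 1 else 0)"

lemma ext_alg_simps[simp]:
  "cg_carrier (ext_alg I D) = ext_carrier I"
  "cg_hom (ext_alg I D) n = {c \<in> ext_carrier I. \<forall>S. c S \<noteq> 0 \<longrightarrow> card S = n}"
  "cg_zero (ext_alg I D) = (\<lambda>S. 0)"
  "cg_add (ext_alg I D) = (\<lambda>a b S. a S + b S)"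
  "cg_smult (ext_alg I D) = (\<lambda>k a S. k * a S)"
  "cg_mul (ext_alg I D) = ext_mul"
  "cg_one (ext_alg I D) = ext_mono {}"
  "cg_diff (ext_alg I D) = D"
  by (auto simp: ext_alg_def ext_mono_def)

lemma ext_gen_mono: "ext_gen t = ext_mono {t}"
  by (simp add: ext_gen_def ext_mono_def)

lemma ext_mono_carrier: "finite S \<Longrightarrow> S \<subseteq> I \<Longrightarrow> ext_mono S \<in> ext_carrier I"
  by (auto simp: ext_carrier_def ext_mono_def)

lemma ext_mono_hom: "finite S \<Longrightarrow> S \<subseteq> I \<Longrightarrow> ext_mono S \<in> cg_hom (ext_alg I D) (card S)"
  by (auto simp: ext_carrier_def ext_mono_def)

lemma ext_mono_mul:
  assumes "finite S" "finite T"
  shows "ext_mul (ext_mono S) (ext_mono T) = (\<lambda>U. wedge_sign S T * ext_mono (S \<union> T) U)"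
proof
  fix U
  show "ext_mul (ext_mono S) (ext_mono T) U = wedge_sign S T * ext_mono (S \<union> T) U"
  proof (cases "finite U")
    case False
    then have "U \<noteq> S \<union> T" using assms by auto
    then show ?thesis using False by (simp add: ext_mul_def ext_mono_def)
  next
    case True
    have "ext_mul (ext_mono S) (ext_mono T) U =
      (\<Sum>S'\<in>Pow U. if S' = S then ext_mono T (U - S) * ext_sign S (U - S) else 0)"
      unfolding ext_mul_def by (rule sum.cong) (auto simp: ext_mono_def)
    also have "\<dots> = (if S \<in> Pow U then ext_mono T (U - S) * ext_sign S (U - S) else 0)"
      using True by (simp add: sum.delta')
    also have "\<dots> = wedge_sign S T * ext_mono (S \<union> T) U"
      by (auto simp: ext_mono_def wedge_sign_def)
    finally show ?thesis .
  qed
qed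

lemma ext_mul_supp: "ext_mul a b U \<noteq> 0 \<Longrightarrow> \<exists>S\<subseteq>U. a S \<noteq> 0 \<and> b (U - S) \<noteq> 0"
  unfolding ext_mul_def by (drule sum.not_neutral_contains_not_neutral) auto

lemma ext_mono_insert:
  assumes "finite X" "\<forall>y\<in>X. x < y"
  shows "ext_mul (ext_mono {x}) (ext_mono X) = (ext_mono (insert x X) :: 'i::linorder set \<Rightarrow> 'k::field)"
proof -
  have "x \<notin> X" using assms by auto
  moreover have e: "{(s, t). s \<in> {x} \<and> t \<in> X \<and> t < s} = {}" using assms by auto
  moreover have "ext_sign {x} X = (1::'k)" unfolding ext_sign_def e by simp
  ultimately have k1: "wedge_sign {x} X = (1::'k)" by (simp add: wedge_sign_def)
  have m: "ext_mul (ext_mono {x}) (ext_mono X) = (\<lambda>U. (wedge_sign {x} X::'k) * ext_mono ({x} \<union> X) U)"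
    by (rule ext_mono_mul) (use assms in auto)
  show ?thesis unfolding m k1 by simp
qed

definition ext_span :: "'i set \<Rightarrow> 'i set \<Rightarrow> ('i set \<Rightarrow> 'k::field) set" where
  "ext_span I J = {c \<in> ext_carrier I. \<forall>S. c S \<noteq> 0 \<longrightarrow> S \<subseteq> J}"

lemma span_mono: "c \<in> ext_span I J \<Longrightarrow> J \<subseteq> J' \<Longrightarrow> c \<in> ext_span I J'"
  unfolding ext_span_def by auto

lemma span_all: "ext_span I I = ext_carrier I"
  by (auto simp: ext_span_def ext_carrier_def)

lemma subalg_gen_support:
  assumes "x \<in> subalg (ext_alg I D) (ext_gen ` J)"
  shows "\<forall>S. x S \<noteq> 0 \<longrightarrow> S \<subseteq> J"
  using assms
proof induction
  case sa_one then show ?case by (simp add: ext_mono_def)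
next
  case (sa_gen x) then show ?case by (auto simp: ext_gen_def split: if_splits)
next
  case (sa_add x y)
  show ?case
  proof (intro allI impI)
    fix S assume "cg_add (ext_alg I D) x y S \<noteq> 0"
    then have "x S \<noteq> 0 \<or> y S \<noteq> 0" by auto
    then show "S \<subseteq> J" using sa_add.IH by blast
  qed
next
  case (sa_smult x c) then show ?case by simp
next
  case (sa_mul x y)
  show ?case
  proof (intro allI impI)
    fix S assume "cg_mul (ext_alg I D) x y S \<noteq> 0"
    then obtain T where "T \<subseteq> S" "x T \<noteq> 0" "y (S - T) \<noteq> 0" using ext_mul_supp[of x y S] by auto
    then have "T \<subseteq> J" "S - T \<subseteq> J" using sa_mul.IH by blast+
    then show "S \<subseteq> J" by blast
  qed
qed

locale ext_cdga =
  fixes I :: "'i::linorder set" and D :: "('i set \<Rightarrow> 'k::field) \<Rightarrow> ('i set \<Rightarrow> 'k)"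
  assumes ext_cdga: "cdga (ext_alg I D)"
begin

sublocale E: cdga_struct "ext_alg I D" by (rule cdga_struct.intro) (rule ext_cdga)

lemma ext_finsum: "finite F \<Longrightarrow> \<phi> \<in> F \<rightarrow> ext_carrier I \<Longrightarrow>
  finsum (ring_of (ext_alg I D)) \<phi> F = (\<lambda>U. \<Sum>S\<in>F. \<phi> S U)"
proof (induction F rule: finite_induct)
  case empty then show ?case by (simp add: E.R.finsum_empty)
next
  case (insert x F)
  then show ?case by (subst E.R.finsum_insert) auto
qed

lemma ext_decomp: "c \<in> ext_carrier I \<Longrightarrow>
  c = finsum (ring_of (ext_alg I D)) (\<lambda>S. (\<lambda>U. c S * ext_mono S U)) {S. c S \<noteq> 0}"
proof -
  assume c: "c \<in> ext_carrier I"
  then have fin: "finite {S. c S \<noteq> 0}" by (auto simp: ext_carrier_def)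
  have "(\<lambda>S. (\<lambda>U. c S * ext_mono S U)) \<in> {S. c S \<noteq> 0} \<rightarrow> ext_carrier I"
  proof
    fix S assume "S \<in> {S. c S \<noteq> 0}"
    then have "ext_mono S \<in> ext_carrier I" using c by (intro ext_mono_carrier) (auto simp: ext_carrier_def)
    then show "(\<lambda>U. c S * ext_mono S U) \<in> ext_carrier I"
      using E.sm_c[of "ext_mono S" "c S"] by simp
  qed
  then have "finsum (ring_of (ext_alg I D)) (\<lambda>S. (\<lambda>U. c S * ext_mono S U)) {S. c S \<noteq> 0} =
     (\<lambda>U. \<Sum>S\<in>{S. c S \<noteq> 0}. c S * ext_mono S U)" using fin by (rule ext_finsum[rotated])
  also have "\<dots> = c"
  proof
    fix U
    have "(\<Sum>S\<in>{S. c S \<noteq> 0}. c S * ext_mono S U) = (\<Sum>S\<in>{S. c S \<noteq> 0}. if U = S then c U else 0)"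
      by (rule sum.cong) (auto simp: ext_mono_def)
    also have "\<dots> = c U" using fin by (simp add: sum.delta)
    finally show "(\<Sum>S\<in>{S. c S \<noteq> 0}. c S * ext_mono S U) = c U" .
  qed
  finally show ?thesis by simp
qed

lemma span_zero[simp]: "(\<lambda>S. 0::'k) \<in> ext_span I J"
  using E.zero_c by (simp add: ext_span_def)

lemma span_add: "(a::'i set \<Rightarrow> 'k) \<in> ext_span I J \<Longrightarrow> b \<in> ext_span I J \<Longrightarrow> (\<lambda>S. a S + b S) \<in> ext_span I J"
proof -
  assume a: "a \<in> ext_span I J" and b: "b \<in> ext_span I J"
  have "\<forall>S. a S + b S \<noteq> 0 \<longrightarrow> S \<subseteq> J"
  proof (intro allI impI)
    fix S assume "a S + b S \<noteq> 0"
    then have "a S \<noteq> 0 \<or> b S \<noteq> 0" by auto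
    then show "S \<subseteq> J" using a b by (auto simp: ext_span_def)
  qed
  then show ?thesis using E.add_c[of a b] a b by (auto simp: ext_span_def)
qed

lemma span_smult: "(a::'i set \<Rightarrow> 'k) \<in> ext_span I J \<Longrightarrow> (\<lambda>S. k * a S) \<in> ext_span I J"
  using E.sm_c[of a k] by (auto simp: ext_span_def)

lemma span_mul: "(a::'i set \<Rightarrow> 'k) \<in> ext_span I J \<Longrightarrow> b \<in> ext_span I J \<Longrightarrow> ext_mul a b \<in> ext_span I J"
proof -
  assume a: "a \<in> ext_span I J" and b: "b \<in> ext_span I J"
  have "\<forall>S. ext_mul a b S \<noteq> 0 \<longrightarrow> S \<subseteq> J"
  proof (intro allI impI)
    fix S assume "ext_mul a b S \<noteq> 0"
    then obtain T where "T \<subseteq> S" "a T \<noteq> 0" "b (S - T) \<noteq> 0" using ext_mul_supp[of a b S] by auto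
    then have "T \<subseteq> J" "S - T \<subseteq> J" using a b by (auto simp: ext_span_def)
    then show "S \<subseteq> J" by blast
  qed
  then show ?thesis using E.mul_c[of a b] a b by (auto simp: ext_span_def)
qed

lemma mono_in_span: "finite S \<Longrightarrow> S \<subseteq> I \<Longrightarrow> S \<subseteq> J \<Longrightarrow> (ext_mono S :: _ \<Rightarrow> 'k) \<in> ext_span I J"
  using ext_mono_carrier by (auto simp: ext_span_def ext_mono_def)

lemma span_carrier: "(a::'i set \<Rightarrow> 'k) \<in> ext_span I J \<Longrightarrow> a \<in> ext_carrier I"
  by (simp add: ext_span_def)

end

definition list_prod :: "('a,'k) cdga \<Rightarrow> ('i \<Rightarrow> 'a) \<Rightarrow> 'i list \<Rightarrow> 'a" where
  "list_prod A b xs = foldr (\<lambda>t acc. cg_mul A (b t) acc) xs (cg_one A)"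

definition mono_prod :: "('a,'k) cdga \<Rightarrow> ('i::linorder \<Rightarrow> 'a) \<Rightarrow> 'i set \<Rightarrow> 'a" where
  "mono_prod A b S = list_prod A b (sorted_list_of_set S)"

definition ext_eval :: "('a,'k::field) cdga \<Rightarrow> ('i::linorder \<Rightarrow> 'a) \<Rightarrow> ('i set \<Rightarrow> 'k) \<Rightarrow> 'a" where
  "ext_eval A b c = finsum (ring_of A) (\<lambda>S. cg_smult A (c S) (mono_prod A b S)) {S. c S \<noteq> 0}"

lemma list_prod_simps[simp]: "list_prod A b [] = cg_one A" "list_prod A b (x # xs) = cg_mul A (b x) (list_prod A b xs)"
  by (simp_all add: list_prod_def)

lemma list_prod_cong: "(\<forall>t\<in>set xs. b t = b' t) \<Longrightarrow> list_prod A b xs = list_prod A b' xs"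
  by (induction xs) auto

lemma mono_prod_cong: "finite S \<Longrightarrow> (\<forall>t\<in>S. b t = b' t) \<Longrightarrow> mono_prod A b S = mono_prod A b' S"
  unfolding mono_prod_def by (rule list_prod_cong) simp

lemma mono_prod_set: "sorted xs \<Longrightarrow> distinct xs \<Longrightarrow> mono_prod A b (set xs) = list_prod A b xs"
  by (simp add: mono_prod_def sorted_list_of_set_sort_remdups distinct_remdups_id sorted_sort_id)

lemma mono_prod_insert_min:
  assumes "finite Y" "\<forall>y\<in>Y. w < y"
  shows "mono_prod A b (insert w Y) = cg_mul A (b w) (mono_prod A b Y)"
proof -
  let ?l = "w # sorted_list_of_set Y"
  have "sorted ?l" "distinct ?l" using assms by (auto intro: less_imp_le)
  moreover have "set ?l = insert w Y" using assms by simp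
  ultimately show ?thesis using mono_prod_set[of ?l A b] by (simp add: mono_prod_def)
qed

context cdga_struct
begin

lemma deg1_anticomm: "x \<in> cg_hom A 1 \<Longrightarrow> y \<in> cg_hom A 1 \<Longrightarrow>
   cg_mul A x y = cg_smult A (-1) (cg_mul A y x)"
  using gcomm[of x 1 y 1] by simp

lemma deg1_square:
  assumes two: "(2::'k) \<noteq> 0" and x: "x \<in> cg_hom A 1"
  shows "cg_mul A x x = cg_zero A"
proof -
  let ?p = "cg_mul A x x"
  have xc: "x \<in> cg_carrier A" using x hom_c by blast
  then have pc: "?p \<in> cg_carrier A" by simp
  have "?p = cg_smult A (-1) ?p" using deg1_anticomm[OF x x] .
  then have "cg_add A ?p ?p = cg_zero A" using add_neg[OF pc] by simp
  moreover have "cg_add A ?p ?p = cg_smult A 2 ?p" using sm_addk[OF pc, of 1 1] pc by simp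
  ultimately have "cg_smult A 2 ?p = cg_zero A" by simp
  then have "cg_smult A (1/2) (cg_smult A 2 ?p) = cg_zero A" by simp
  then show ?thesis using sm_sm[OF pc, of "1/2" 2] two pc by simp
qed

lemma list_prod_hom: "\<forall>t\<in>set xs. b t \<in> cg_hom A 1 \<Longrightarrow> list_prod A b xs \<in> cg_hom A (length xs)"
  by (induction xs) (auto dest: hom_mul)

lemma list_prod_c: "\<forall>t\<in>set xs. b t \<in> cg_hom A 1 \<Longrightarrow> list_prod A b xs \<in> cg_carrier A"
  using list_prod_hom hom_c by blast

lemma mono_prod_hom: "finite S \<Longrightarrow> \<forall>t\<in>S. b t \<in> cg_hom A 1 \<Longrightarrow> mono_prod A b S \<in> cg_hom A (card S)"
  unfolding mono_prod_def using list_prod_hom[of "sorted_list_of_set S" b] by simp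

lemma mono_prod_c: "finite S \<Longrightarrow> \<forall>t\<in>S. b t \<in> cg_hom A 1 \<Longrightarrow> mono_prod A b S \<in> cg_carrier A"
  using mono_prod_hom hom_c by blast

lemma mono_prod_carrier: "finite S \<Longrightarrow> S \<subseteq> J \<Longrightarrow> \<forall>t\<in>J. b t \<in> cg_hom A 1 \<Longrightarrow> mono_prod A b S \<in> cg_carrier A"
  using mono_prod_c[of S b] by blast

lemma mono_prod_hom_on: "finite S \<Longrightarrow> S \<subseteq> J \<Longrightarrow> \<forall>t\<in>J. b t \<in> cg_hom A 1 \<Longrightarrow> mono_prod A b S \<in> cg_hom A (card S)"
  using mono_prod_hom[of S b] by blast

lemma gen_mul_list_prod:
  assumes two: "(2::'k) \<noteq> 0"
  shows "b s \<in> cg_hom A 1 \<Longrightarrow> \<forall>t\<in>set xs. b t \<in> cg_hom A 1 \<Longrightarrow> sorted xs \<Longrightarrow> distinct xs \<Longrightarrow>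
    cg_mul A (b s) (list_prod A b xs) = cg_smult A (insert_sign s (set xs)) (mono_prod A b (insert s (set xs)))"
proof (induction xs)
  case Nil
  have "b s \<in> cg_carrier A" using Nil hom_c by blast
  moreover have "mono_prod A b {s} = cg_mul A (b s) (cg_one A)" using mono_prod_set[of "[s]" A b] by simp
  ultimately show ?case by (simp add: insert_sign_def)
next
  case (Cons w ws)
  have bs: "b s \<in> cg_carrier A" and bw: "b w \<in> cg_carrier A" "b w \<in> cg_hom A 1"
    using Cons hom_c by auto
  have lt: "\<forall>y\<in>set ws. w < y" using Cons.prems(3,4) by (auto simp: le_less)
  have Mws: "list_prod A b ws \<in> cg_carrier A" using Cons.prems by (intro list_prod_c) auto
  have Mwws: "list_prod A b (w # ws) = mono_prod A b (set (w # ws))"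
    using Cons.prems mono_prod_set by metis
  have mwws: "mono_prod A b (set (w # ws)) \<in> cg_carrier A" using Cons.prems by (intro mono_prod_c) auto
  consider "s < w" | "s = w" | "w < s" by fastforce
  then show ?case
  proof cases
    case 1
    (* b s simply becomes the first factor *)
    then have "insert_sign s (set (w # ws)) = (1::'k)" using lt by (intro insert_sign_least) auto
    moreover have "mono_prod A b (insert s (set (w # ws))) = cg_mul A (b s) (mono_prod A b (set (w # ws)))"
      using lt 1 by (intro mono_prod_insert_min) auto
    ultimately show ?thesis using Mwws mwws bs by simp
  next
    case 2
    (* a repeated degree-1 factor kills the product *)
    have "cg_mul A (b s) (list_prod A b (w # ws)) = cg_mul A (cg_mul A (b s) (b s)) (list_prod A b ws)"
      using 2 bs Mws by (simp add: mul_assoc)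
    also have "\<dots> = cg_zero A" using deg1_square[OF two, of "b s"] Cons.prems Mws by simp
    finally show ?thesis using 2 mwws by (simp add: insert_sign_mem)
  next
    case 3
    (* b s anticommutes past b w, then the induction hypothesis applies *)
    have ih: "cg_mul A (b s) (list_prod A b ws) =
        cg_smult A (insert_sign s (set ws)) (mono_prod A b (insert s (set ws)))"
      using Cons by auto
    have mc: "mono_prod A b (insert s (set ws)) \<in> cg_carrier A" using Cons.prems by (intro mono_prod_c) auto
    have "cg_mul A (b s) (list_prod A b (w # ws)) = cg_mul A (cg_mul A (b s) (b w)) (list_prod A b ws)"
      using bs bw Mws by (simp add: mul_assoc)
    also have "\<dots> = cg_smult A (-1) (cg_mul A (b w) (cg_mul A (b s) (list_prod A b ws)))"
      using deg1_anticomm[of "b s" "b w"] Cons.prems bs bw Mws by (simp add: mul_sm mul_assoc)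
    also have "\<dots> = cg_smult A (- insert_sign s (set ws)) (cg_mul A (b w) (mono_prod A b (insert s (set ws))))"
      using ih mc bw by (simp add: mul_sm sm_sm)
    also have "cg_mul A (b w) (mono_prod A b (insert s (set ws))) = mono_prod A b (insert s (set (w # ws)))"
      using lt 3 mono_prod_insert_min[of "insert s (set ws)" w A b] by (simp add: insert_commute)
    also have "- insert_sign s (set ws) = (insert_sign s (set (w # ws)) :: 'k)"
      using insert_sign_insert_less[of "set ws" w s] 3 Cons.prems(4) by (metis distinct.simps(2)
        finite_set list.set(2))
    finally show ?thesis .
  qed
qed

lemma gen_mul_mono_prod:
  assumes two: "(2::'k) \<noteq> 0" and "finite W" "b s \<in> cg_hom A 1" "\<forall>t\<in>W. b t \<in> cg_hom A 1"
  shows "cg_mul A (b s) (mono_prod A b W) = cg_smult A (insert_sign s W) (mono_prod A b (insert s W))"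
  using gen_mul_list_prod[OF two, where b=b and s=s and xs="sorted_list_of_set W"] assms by (simp add: mono_prod_def)

lemma list_prod_mul_mono_prod:
  assumes two: "(2::'k) \<noteq> 0"
  shows "finite T \<Longrightarrow> \<forall>t\<in>set xs \<union> T. b t \<in> cg_hom A 1 \<Longrightarrow> sorted xs \<Longrightarrow> distinct xs \<Longrightarrow>
   cg_mul A (list_prod A b xs) (mono_prod A b T) = cg_smult A (wedge_sign (set xs) T) (mono_prod A b (set xs \<union> T))"
proof (induction xs)
  case Nil
  have "mono_prod A b T \<in> cg_carrier A" using Nil by (intro mono_prod_c) auto
  then show ?case by (simp add: wedge_sign_def ext_sign_def)
next
  case (Cons x xs)
  have lt: "\<forall>y\<in>set xs. x < y" using Cons.prems(3,4) by (auto simp: le_less)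
  have bx: "b x \<in> cg_carrier A" "b x \<in> cg_hom A 1" using Cons.prems hom_c by auto
  have Mxs: "list_prod A b xs \<in> cg_carrier A" using Cons.prems by (intro list_prod_c) auto
  have mT: "mono_prod A b T \<in> cg_carrier A" using Cons.prems by (intro mono_prod_c) auto
  have mU: "mono_prod A b (set xs \<union> T) \<in> cg_carrier A" using Cons.prems by (intro mono_prod_c) auto
  have ih: "cg_mul A (list_prod A b xs) (mono_prod A b T) = cg_smult A (wedge_sign (set xs) T) (mono_prod A b (set xs \<union> T))"
    using Cons by auto
  have "cg_mul A (list_prod A b (x # xs)) (mono_prod A b T) = cg_mul A (b x) (cg_mul A (list_prod A b xs) (mono_prod A b T))"
    using bx Mxs mT by (simp add: mul_assoc)
  also have "\<dots> = cg_smult A (wedge_sign (set xs) T) (cg_mul A (b x) (mono_prod A b (set xs \<union> T)))"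
    using ih bx mU by (simp add: mul_sm)
  also have "cg_mul A (b x) (mono_prod A b (set xs \<union> T)) =
     cg_smult A (insert_sign x (set xs \<union> T)) (mono_prod A b (insert x (set xs \<union> T)))"
    using Cons.prems by (intro gen_mul_mono_prod[OF two]) auto
  also have "cg_smult A (wedge_sign (set xs) T) (cg_smult A (insert_sign x (set xs \<union> T)) (mono_prod A b (insert x (set xs \<union> T))))
    = cg_smult A (wedge_sign (set (x # xs)) T) (mono_prod A b (set (x # xs) \<union> T))"
  proof -
    have "mono_prod A b (insert x (set xs \<union> T)) \<in> cg_carrier A" using Cons.prems by (intro mono_prod_c) auto
    moreover have "wedge_sign (set (x # xs)) T = wedge_sign (set xs) T * (insert_sign x (set xs \<union> T) :: 'k)"
      using wedge_sign_insert[of "set xs" T x] Cons.prems lt by auto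
    ultimately show ?thesis by (simp add: sm_sm)
  qed
  finally show ?case .
qed

lemma mono_prod_mul:
  assumes two: "(2::'k) \<noteq> 0" and "finite S" "finite T" "\<forall>t\<in>S \<union> T. b t \<in> cg_hom A 1"
  shows "cg_mul A (mono_prod A b S) (mono_prod A b T) = cg_smult A (wedge_sign S T) (mono_prod A b (S \<union> T))"
  using list_prod_mul_mono_prod[OF two, where T=T and b=b and xs="sorted_list_of_set S"] assms by (simp add: mono_prod_def)

end

locale eval_ctx = ext_cdga I D
  for I :: "'i::linorder set" and D :: "('i set \<Rightarrow> 'k::field) \<Rightarrow> ('i set \<Rightarrow> 'k)" +
  fixes B :: "('b, 'k) cdga"
  assumes cB: "cdga B"
begin

sublocale B: cdga_struct B by (rule cdga_struct.intro) (rule cB)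

abbreviation "E \<equiv> ext_alg I D"

lemma span_finite: "c \<in> ext_span I J \<Longrightarrow> finite {S. c S \<noteq> 0}"
  by (auto simp: ext_span_def ext_carrier_def)

lemma span_support: "c \<in> ext_span I J \<Longrightarrow> c S \<noteq> 0 \<Longrightarrow> finite S \<and> S \<subseteq> J \<and> S \<subseteq> I"
  by (auto simp: ext_span_def ext_carrier_def)

lemma term_c:
  assumes "c \<in> ext_span I J" "\<forall>t\<in>J. b t \<in> cg_hom B 1" "c S \<noteq> 0"
  shows "cg_smult B (c S) (mono_prod B b S) \<in> cg_carrier B"
  using span_support[OF assms(1,3)] B.mono_prod_carrier[of S J b] assms(2) by simp

lemma terms_c:
  "c \<in> ext_span I J \<Longrightarrow> \<forall>t\<in>J. b t \<in> cg_hom B 1 \<Longrightarrow>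
    (\<lambda>S. cg_smult B (c S) (mono_prod B b S)) \<in> {S. c S \<noteq> 0} \<rightarrow> cg_carrier B"
  using term_c by blast

lemma eval_alt:
  assumes c: "c \<in> ext_span I J" and gens: "\<forall>t\<in>J. b t \<in> cg_hom B 1"
    and F: "finite F" "{S. c S \<noteq> 0} \<subseteq> F" "\<forall>S\<in>F. finite S \<and> S \<subseteq> J"
  shows "ext_eval B b c = finsum (ring_of B) (\<lambda>S. cg_smult B (c S) (mono_prod B b S)) F"
  unfolding ext_eval_def
  by (rule B.R.add.finprod_mono_neutral_cong_right[folded finsum_def, symmetric])
     (use F gens B.mono_prod_carrier[of _ J b] in auto)

lemma eval_c: "c \<in> ext_span I J \<Longrightarrow> \<forall>t\<in>J. b t \<in> cg_hom B 1 \<Longrightarrow> ext_eval B b c \<in> cg_carrier B"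
  unfolding ext_eval_def by (rule B.R.finsum_closed) (rule terms_c)

lemma eval_hom:
  assumes "c \<in> ext_span I J" "c \<in> cg_hom E n" "\<forall>t\<in>J. b t \<in> cg_hom B 1"
  shows "ext_eval B b c \<in> cg_hom B n"
  unfolding ext_eval_def
proof (rule B.hom_finsum)
  show "finite {S. c S \<noteq> 0}" using assms span_finite by blast
  show "(\<lambda>S. cg_smult B (c S) (mono_prod B b S)) \<in> {S. c S \<noteq> 0} \<rightarrow> cg_hom B n"
  proof
    fix S assume "S \<in> {S. c S \<noteq> 0}"
    then have "finite S" "S \<subseteq> J" "card S = n" using assms span_support[of c J S] by auto
    then show "cg_smult B (c S) (mono_prod B b S) \<in> cg_hom B n"
      using B.mono_prod_hom_on[of S J b] assms(3) by simp
  qed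
qed

lemma eval_zero: "ext_eval B b (\<lambda>S. 0) = cg_zero B"
  by (simp add: ext_eval_def B.R.finsum_empty)

lemma eval_add:
  assumes a: "a \<in> ext_span I J" and c: "c \<in> ext_span I J" and gens: "\<forall>t\<in>J. b t \<in> cg_hom B 1"
  shows "ext_eval B b (\<lambda>S. a S + c S) = cg_add B (ext_eval B b a) (ext_eval B b c)"
proof -
  let ?F = "{S. a S \<noteq> 0} \<union> {S. c S \<noteq> 0}"
  let ?t = "\<lambda>x S. cg_smult B (x S) (mono_prod B b S)"
  have fin: "finite ?F" using span_finite[OF a] span_finite[OF c] by simp
  have F: "\<forall>S\<in>?F. finite S \<and> S \<subseteq> J"
  proof
    fix S assume "S \<in> ?F"
    then show "finite S \<and> S \<subseteq> J" using span_support[OF a, of S] span_support[OF c, of S] by auto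
  qed
  have mc: "\<forall>S\<in>?F. mono_prod B b S \<in> cg_carrier B"
  proof
    fix S assume "S \<in> ?F"
    then show "mono_prod B b S \<in> cg_carrier B" using F B.mono_prod_carrier[of S J b] gens by blast
  qed
  have "ext_eval B b (\<lambda>S. a S + c S) = finsum (ring_of B) (?t (\<lambda>S. a S + c S)) ?F"
    by (rule eval_alt[OF span_add[OF a c] gens fin _ F]) auto
  also have "\<dots> = finsum (ring_of B) (\<lambda>S. cg_add B (?t a S) (?t c S)) ?F"
    by (rule B.R.finsum_cong) (use mc in \<open>auto simp: B.sm_addk\<close>)
  also have "\<dots> = cg_add B (finsum (ring_of B) (?t a) ?F) (finsum (ring_of B) (?t c) ?F)"
    by (rule B.R.finsum_addf) (use mc in auto)
  also have "finsum (ring_of B) (?t a) ?F = ext_eval B b a"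
    by (rule eval_alt[OF a gens fin _ F, symmetric]) auto
  also have "finsum (ring_of B) (?t c) ?F = ext_eval B b c"
    by (rule eval_alt[OF c gens fin _ F, symmetric]) auto
  finally show ?thesis .
qed

lemma eval_smult:
  assumes a: "a \<in> ext_span I J" and gens: "\<forall>t\<in>J. b t \<in> cg_hom B 1"
  shows "ext_eval B b (\<lambda>S. k * a S) = cg_smult B k (ext_eval B b a)"
proof -
  let ?F = "{S. a S \<noteq> 0}"
  have fin: "finite ?F" using span_finite[OF a] .
  have F: "\<forall>S\<in>?F. finite S \<and> S \<subseteq> J" using span_support[OF a] by simp
  have mc: "\<forall>S\<in>?F. mono_prod B b S \<in> cg_carrier B"
  proof
    fix S assume "S \<in> ?F"
    then show "mono_prod B b S \<in> cg_carrier B" using F B.mono_prod_carrier[of S J b] gens by blast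
  qed
  have "ext_eval B b (\<lambda>S. k * a S) = finsum (ring_of B) (\<lambda>S. cg_smult B (k * a S) (mono_prod B b S)) ?F"
    by (rule eval_alt[OF span_smult[OF a] gens fin _ F]) auto
  also have "\<dots> = finsum (ring_of B) (\<lambda>S. cg_smult B k (cg_smult B (a S) (mono_prod B b S))) ?F"
    by (rule B.R.finsum_cong) (use mc in \<open>auto simp: B.sm_sm\<close>)
  also have "\<dots> = cg_smult B k (ext_eval B b a)"
    unfolding ext_eval_def by (rule B.sm_finsum[symmetric]) (use fin mc in auto)
  finally show ?thesis .
qed

lemma eval_finsum:
  assumes gens: "\<forall>t\<in>J. b t \<in> cg_hom B 1" and "finite F" "\<phi> \<in> F \<rightarrow> ext_span I J"
  shows "ext_eval B b (finsum (ring_of E) \<phi> F) = finsum (ring_of B) (\<lambda>i. ext_eval B b (\<phi> i)) F"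
  by (rule additive_finsum[where V="ext_span I J", OF ext_cdga cB _ _ _ _ _ _ assms(2,3)])
     (use span_carrier span_add eval_c[OF _ gens] eval_zero eval_add[OF _ _ gens] in auto)

lemma eval_mono:
  assumes "finite S" "S \<subseteq> J" "\<forall>t\<in>J. b t \<in> cg_hom B 1"
  shows "ext_eval B b (ext_mono S) = mono_prod B b S"
proof -
  have "{T. ext_mono S T \<noteq> (0::'k)} = {S}" by (auto simp: ext_mono_def)
  moreover have "mono_prod B b S \<in> cg_carrier B" using B.mono_prod_carrier[of S J b] assms by blast
  ultimately show ?thesis by (simp add: ext_eval_def ext_mono_def)
qed

lemma eval_term:
  assumes "finite S" "S \<subseteq> J" "J \<subseteq> I" "\<forall>t\<in>J. b t \<in> cg_hom B 1"
  shows "ext_eval B b (\<lambda>U. k * ext_mono S U) = cg_smult B k (mono_prod B b S)"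
  using eval_smult[OF mono_in_span[of S J] assms(4), of k] eval_mono[OF assms(1,2,4)] assms by auto

text \<open>Multiplicativity.  By bilinearity it suffices to treat products of two terms, where it
  is the sign rule for products of monomials in degree-1 elements.\<close>

lemma eval_mul_terms:
  assumes two: "(2::'k) \<noteq> 0" and S: "finite S" "S \<subseteq> J" and T: "finite T" "T \<subseteq> J"
    and JI: "J \<subseteq> I" and gens: "\<forall>t\<in>J. b t \<in> cg_hom B 1"
  shows "ext_eval B b (ext_mul (\<lambda>U. \<alpha> * ext_mono S U) (\<lambda>U. \<beta> * ext_mono T U)) =
    cg_mul B (cg_smult B \<alpha> (mono_prod B b S)) (cg_smult B \<beta> (mono_prod B b T))"
proof -
  have eS: "ext_mono S \<in> cg_carrier E" and eT: "ext_mono T \<in> cg_carrier E"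
    using S T JI by (simp_all add: ext_mono_carrier order_trans)
  have mS: "mono_prod B b S \<in> cg_carrier B" and mT: "mono_prod B b T \<in> cg_carrier B"
    using B.mono_prod_carrier[OF S gens] B.mono_prod_carrier[OF T gens] by simp_all
  have "ext_mul (\<lambda>U. \<alpha> * ext_mono S U) (\<lambda>U. \<beta> * ext_mono T U) =
      (\<lambda>U. \<alpha> * (\<beta> * ext_mul (ext_mono S) (ext_mono T) U))"
    using E.mul_sm(1)[OF eS E.sm_c[OF eT], of \<alpha> \<beta>] E.mul_sm(2)[OF eS eT, of \<beta>] by simp
  also have "\<dots> = (\<lambda>U. (\<alpha> * \<beta> * wedge_sign S T) * ext_mono (S \<union> T) U)"
    by (simp add: ext_mono_mul[OF S(1) T(1)] mult.assoc)
  finally have "ext_eval B b (ext_mul (\<lambda>U. \<alpha> * ext_mono S U) (\<lambda>U. \<beta> * ext_mono T U)) =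
      cg_smult B (\<alpha> * \<beta>) (cg_smult B (wedge_sign S T) (mono_prod B b (S \<union> T)))"
    using eval_term[of "S \<union> T" J b "\<alpha> * \<beta> * wedge_sign S T"] S T JI gens
      B.mono_prod_carrier[of "S \<union> T" J b] by (simp add: B.sm_sm)
  also have "cg_smult B (wedge_sign S T) (mono_prod B b (S \<union> T)) =
      cg_mul B (mono_prod B b S) (mono_prod B b T)"
  proof -
    have "\<forall>t\<in>S \<union> T. b t \<in> cg_hom B 1" using S(2) T(2) gens by blast
    then show ?thesis using B.mono_prod_mul[OF two S(1) T(1)] by simp
  qed
  finally show ?thesis using mS mT by (simp add: B.mul_sm B.sm_sm mult.commute)
qed

lemma span_expand:
  assumes c: "c \<in> ext_span I J" and JI: "J \<subseteq> I"
  shows "c = finsum (ring_of E) (\<lambda>S U. c S * ext_mono S U) {S. c S \<noteq> 0}"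
    and "(\<lambda>S U. c S * ext_mono S U) \<in> {S. c S \<noteq> 0} \<rightarrow> ext_span I J"
  using ext_decomp[OF span_carrier[OF c]] span_support[OF c] JI
  by (auto intro!: span_smult mono_in_span)

lemma eval_mul_term_left:
  assumes two: "(2::'k) \<noteq> 0" and S: "finite S" "S \<subseteq> J" and c: "c \<in> ext_span I J"
    and JI: "J \<subseteq> I" and gens: "\<forall>t\<in>J. b t \<in> cg_hom B 1"
  shows "ext_eval B b (ext_mul (\<lambda>U. \<alpha> * ext_mono S U) c) =
    cg_mul B (cg_smult B \<alpha> (mono_prod B b S)) (ext_eval B b c)"
proof -
  let ?F = "{T. c T \<noteq> 0}" and ?e = "\<lambda>T U. c T * ext_mono T U"
  let ?x = "\<lambda>U. \<alpha> * ext_mono S U"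
  have F: "finite ?F" using span_finite[OF c] .
  have x: "?x \<in> ext_span I J" using S JI by (intro span_smult mono_in_span) auto
  have xC: "?x \<in> cg_carrier E" using span_carrier[OF x] by simp
  have e: "?e \<in> ?F \<rightarrow> ext_span I J" using span_expand(2)[OF c JI] .
  then have eC: "?e \<in> ?F \<rightarrow> cg_carrier E" by (auto simp: Pi_iff intro: span_carrier)
  have xb: "cg_smult B \<alpha> (mono_prod B b S) \<in> cg_carrier B"
    using B.mono_prod_carrier[OF S gens] by simp
  have "ext_mul ?x c = ext_mul ?x (finsum (ring_of E) ?e ?F)"
    by (rule arg_cong[OF span_expand(1)[OF c JI]])
  also have "\<dots> = finsum (ring_of E) (\<lambda>T. ext_mul ?x (?e T)) ?F"
    using E.R.finsum_rdistr[OF F xC eC] by simp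
  finally have "ext_eval B b (ext_mul ?x c) =
      finsum (ring_of B) (\<lambda>T. ext_eval B b (ext_mul ?x (?e T))) ?F"
    using eval_finsum[OF gens F, of "\<lambda>T. ext_mul ?x (?e T)"] span_mul[OF x] e
    by (auto simp only: Pi_iff)
  also have "\<dots> = finsum (ring_of B) (\<lambda>T. cg_mul B (cg_smult B \<alpha> (mono_prod B b S))
      (cg_smult B (c T) (mono_prod B b T))) ?F"
  proof (rule B.R.finsum_cong')
    show "(\<lambda>T. cg_mul B (cg_smult B \<alpha> (mono_prod B b S)) (cg_smult B (c T) (mono_prod B b T)))
        \<in> ?F \<rightarrow> cg_carrier B"
      using xb term_c[OF c gens] by simp
  next
    fix T assume "T \<in> ?F"
    then have "finite T" "T \<subseteq> J" using span_support[OF c] by auto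
    then show "ext_eval B b (ext_mul ?x (?e T)) =
        cg_mul B (cg_smult B \<alpha> (mono_prod B b S)) (cg_smult B (c T) (mono_prod B b T))"
      by (rule eval_mul_terms[OF two S _ _ JI gens])
  qed simp
  also have "\<dots> = cg_mul B (cg_smult B \<alpha> (mono_prod B b S)) (ext_eval B b c)"
    unfolding ext_eval_def using B.R.finsum_rdistr[OF F xb terms_c[OF c gens]] by simp
  finally show ?thesis .
qed

lemma eval_mul:
  assumes two: "(2::'k) \<noteq> 0" and a: "a \<in> ext_span I J" and c: "c \<in> ext_span I J"
    and gens: "\<forall>t\<in>J. b t \<in> cg_hom B 1" and JI: "J \<subseteq> I"
  shows "ext_eval B b (ext_mul a c) = cg_mul B (ext_eval B b a) (ext_eval B b c)"
proof -
  let ?F = "{S. a S \<noteq> 0}" and ?e = "\<lambda>S U. a S * ext_mono S U"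
  have F: "finite ?F" using span_finite[OF a] .
  have cC: "c \<in> cg_carrier E" using span_carrier[OF c] by simp
  have e: "?e \<in> ?F \<rightarrow> ext_span I J" using span_expand(2)[OF a JI] .
  then have eC: "?e \<in> ?F \<rightarrow> cg_carrier E" by (auto simp: Pi_iff intro: span_carrier)
  have ec: "ext_eval B b c \<in> cg_carrier B" using eval_c[OF c gens] .
  have "ext_mul a c = ext_mul (finsum (ring_of E) ?e ?F) c"
    by (rule arg_cong[OF span_expand(1)[OF a JI]])
  also have "\<dots> = finsum (ring_of E) (\<lambda>S. ext_mul (?e S) c) ?F"
    using E.R.finsum_ldistr[OF F cC eC] by simp
  finally have "ext_eval B b (ext_mul a c) =
      finsum (ring_of B) (\<lambda>S. ext_eval B b (ext_mul (?e S) c)) ?F"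
    using eval_finsum[OF gens F, of "\<lambda>S. ext_mul (?e S) c"] span_mul[OF _ c] e
    by (auto simp only: Pi_iff)
  also have "\<dots> = finsum (ring_of B) (\<lambda>S. cg_mul B (cg_smult B (a S) (mono_prod B b S))
      (ext_eval B b c)) ?F"
  proof (rule B.R.finsum_cong')
    show "(\<lambda>S. cg_mul B (cg_smult B (a S) (mono_prod B b S)) (ext_eval B b c)) \<in> ?F \<rightarrow> cg_carrier B"
      using ec term_c[OF a gens] by simp
  next
    fix S assume "S \<in> ?F"
    then have "finite S" "S \<subseteq> J" using span_support[OF a] by auto
    then show "ext_eval B b (ext_mul (?e S) c) =
        cg_mul B (cg_smult B (a S) (mono_prod B b S)) (ext_eval B b c)"
      by (rule eval_mul_term_left[OF two _ _ c JI gens])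
  qed simp
  also have "\<dots> = cg_mul B (ext_eval B b a) (ext_eval B b c)"
    unfolding ext_eval_def[of B b a] using B.R.finsum_ldistr[OF F ec terms_c[OF a gens]] by simp
  finally show ?thesis .
qed

lemma eval_cong:
  assumes c: "c \<in> ext_span I J" and eq: "\<forall>t\<in>J. h t = h' t"
    and gens: "\<forall>t\<in>J. h' t \<in> cg_hom B 1"
  shows "ext_eval B h c = ext_eval B h' c"
  unfolding ext_eval_def
proof (rule B.R.finsum_cong')
  show "{S. c S \<noteq> 0} = {S. c S \<noteq> 0}" ..
  show "(\<lambda>S. cg_smult B (c S) (mono_prod B h' S)) \<in> {S. c S \<noteq> 0} \<rightarrow> cg_carrier B"
    by (rule terms_c[OF c gens])
  fix S assume "S \<in> {S. c S \<noteq> 0}"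
  then have "finite S" "\<forall>t\<in>S. h t = h' t" using span_support[OF c, of S] eq by auto
  then show "cg_smult B (c S) (mono_prod B h S) = cg_smult B (c S) (mono_prod B h' S)"
    using mono_prod_cong[of S h h' B] by simp
qed

end

locale lift_ctx = eval_ctx I D B
  for I :: "'i::linorder set" and D :: "('i set \<Rightarrow> 'k::field) \<Rightarrow> ('i set \<Rightarrow> 'k)"
    and B :: "('b, 'k) cdga" +
  fixes A :: "('a, 'k) cdga" and f :: "('i set \<Rightarrow> 'k) \<Rightarrow> 'a" and \<psi> :: "'b \<Rightarrow> 'a"
  assumes cA: "cdga A" and hf: "cdga_hom (ext_alg I D) A f" and h\<psi>: "cdga_hom B A \<psi>"
begin

sublocale A: cdga_struct A by (rule cdga_struct.intro) (rule cA)

definition lifts_on :: "'i set \<Rightarrow> ('i \<Rightarrow> 'b) \<Rightarrow> bool" where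
  "lifts_on J b \<longleftrightarrow> (\<forall>t\<in>J. b t \<in> cg_hom B 1 \<and> \<psi> (b t) = f (ext_mono {t}) \<and>
      cg_diff B (b t) = ext_eval B b (D (ext_mono {t})) \<and> D (ext_mono {t}) \<in> ext_span I J)"

text \<open>Lifting the generators makes every element compatible: the
  compatible elements contain 1 and the generators and are closed under sums, scalar
  multiples and (by the Leibniz rule) products.\<close>

definition compatible :: "'i set \<Rightarrow> ('i \<Rightarrow> 'b) \<Rightarrow> ('i set \<Rightarrow> 'k) \<Rightarrow> bool" where
  "compatible J b c \<longleftrightarrow> c \<in> ext_span I J \<and> D c \<in> ext_span I J \<and>
     ext_eval B b (D c) = cg_diff B (ext_eval B b c) \<and> \<psi> (ext_eval B b c) = f c"

lemma compatible_one:
  assumes "\<forall>t\<in>J. b t \<in> cg_hom B 1"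
  shows "compatible J b (ext_mono {})"
proof -
  have "ext_eval B b (ext_mono {}) = cg_one B"
    using eval_mono[of "{}" J b] assms by (simp add: mono_prod_def)
  moreover have "D (ext_mono {}) = (\<lambda>S. 0)" using E.d_one by simp
  ultimately show ?thesis
    using cdga_homD(6)[OF h\<psi>] cdga_homD(6)[OF hf] mono_in_span[of "{}" J] eval_zero
    by (simp add: compatible_def)
qed

lemma compatible_gen:
  assumes lift: "lifts_on J b" and t: "t \<in> J" and JI: "J \<subseteq> I"
  shows "compatible J b (ext_mono {t})"
proof -
  have gens: "\<forall>t\<in>J. b t \<in> cg_hom B 1" using lift by (simp add: lifts_on_def)
  have "ext_eval B b (ext_mono {t}) = mono_prod B b {t}" using eval_mono[of "{t}" J b] t gens by auto
  also have "\<dots> = b t"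
    using mono_prod_insert_min[of "{}" t B b] B.hom_c[of "b t" 1] gens t by (simp add: mono_prod_def)
  finally show ?thesis
    using lift t JI mono_in_span[of "{t}" J] by (auto simp: compatible_def lifts_on_def)
qed

lemma compatible_add:
  assumes gens: "\<forall>t\<in>J. b t \<in> cg_hom B 1" and a: "compatible J b a" and c: "compatible J b c"
  shows "compatible J b (\<lambda>S. a S + c S)"
proof -
  have span: "a \<in> ext_span I J" "c \<in> ext_span I J" "D a \<in> ext_span I J" "D c \<in> ext_span I J"
    using a c by (auto simp: compatible_def)
  then have carrier: "a \<in> ext_carrier I" "c \<in> ext_carrier I" using span_carrier by auto
  have "D (\<lambda>S. a S + c S) = (\<lambda>S. D a S + D c S)" using E.d_add carrier by simp
  moreover have "ext_eval B b (\<lambda>S. a S + c S) = cg_add B (ext_eval B b a) (ext_eval B b c)"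
    by (rule eval_add[OF span(1,2) gens])
  moreover have "f (\<lambda>S. a S + c S) = cg_add A (f a) (f c)"
    using cdga_homD(3)[OF hf] carrier by simp
  ultimately show ?thesis
    using a c span eval_add[OF span(3,4) gens] eval_c[OF _ gens] B.d_add cdga_homD(3)[OF h\<psi>]
    by (auto simp: compatible_def intro: span_add)
qed

lemma compatible_smult:
  assumes gens: "\<forall>t\<in>J. b t \<in> cg_hom B 1" and c: "compatible J b c"
  shows "compatible J b (\<lambda>S. k * c S)"
proof -
  have span: "c \<in> ext_span I J" "D c \<in> ext_span I J" using c by (auto simp: compatible_def)
  then have carrier: "c \<in> ext_carrier I" using span_carrier by auto
  have "D (\<lambda>S. k * c S) = (\<lambda>S. k * D c S)" using E.d_sm carrier by simp
  moreover have "f (\<lambda>S. k * c S) = cg_smult A k (f c)" using cdga_homD(4)[OF hf] carrier by simp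
  ultimately show ?thesis
    using c span eval_smult[OF _ gens] eval_c[OF _ gens] B.d_sm cdga_homD(4)[OF h\<psi>]
    by (auto simp: compatible_def intro: span_smult)
qed

lemma compatible_mul:
  assumes two: "(2::'k) \<noteq> 0" and JI: "J \<subseteq> I" and gens: "\<forall>t\<in>J. b t \<in> cg_hom B 1"
    and x: "x \<in> cg_hom E i" and cx: "compatible J b x" and cy: "compatible J b y"
  shows "compatible J b (ext_mul x y)"
proof -
  have span: "x \<in> ext_span I J" "y \<in> ext_span I J" "D x \<in> ext_span I J" "D y \<in> ext_span I J"
    using cx cy by (auto simp: compatible_def)
  then have yC: "y \<in> ext_carrier I" using span_carrier by auto
  have ex: "ext_eval B b x \<in> cg_hom B i" using eval_hom[OF span(1) x gens] .
  have ey: "ext_eval B b y \<in> cg_carrier B" using eval_c[OF span(2) gens] .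
  have Dxy: "D (ext_mul x y) = (\<lambda>S. ext_mul (D x) y S + (-1) ^ i * ext_mul x (D y) S)"
    using E.leibniz[OF x, of y] yC by simp
  have "D (ext_mul x y) \<in> ext_span I J"
    unfolding Dxy by (intro span_add span_smult span_mul span)
  moreover have "ext_eval B b (D (ext_mul x y)) = cg_diff B (ext_eval B b (ext_mul x y))"
  proof -
    have "ext_eval B b (D (ext_mul x y)) = cg_add B (ext_eval B b (ext_mul (D x) y))
        (cg_smult B ((-1) ^ i) (ext_eval B b (ext_mul x (D y))))"
      unfolding Dxy using eval_add[OF _ _ gens] eval_smult[OF _ gens] span span_mul span_smult
      by simp
    also have "\<dots> = cg_add B (cg_mul B (cg_diff B (ext_eval B b x)) (ext_eval B b y))
        (cg_smult B ((-1) ^ i) (cg_mul B (ext_eval B b x) (cg_diff B (ext_eval B b y))))"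
      using eval_mul[OF two _ _ gens JI] span cx cy by (simp add: compatible_def)
    also have "\<dots> = cg_diff B (ext_eval B b (ext_mul x y))"
      using B.leibniz[OF ex ey] eval_mul[OF two span(1,2) gens JI] by simp
    finally show ?thesis .
  qed
  moreover have "\<psi> (ext_eval B b (ext_mul x y)) = f (ext_mul x y)"
    using eval_mul[OF two span(1,2) gens JI] cdga_homD(5)[OF h\<psi> B.hom_c[OF ex] ey]
      cdga_homD(5)[OF hf, of x y] span_carrier span cx cy by (simp add: compatible_def)
  ultimately show ?thesis using span by (simp add: compatible_def span_mul)
qed

(* Monomials are products of generators, inserted in increasing order. *)
lemma compatible_mono:
  assumes two: "(2::'k) \<noteq> 0" and JI: "J \<subseteq> I" and lift: "lifts_on J b"
    and S: "finite S" "S \<subseteq> J"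
  shows "compatible J b (ext_mono S)"
  using S
proof (induction S rule: finite_linorder_min_induct)
  case empty
  show ?case using lift compatible_one by (simp add: lifts_on_def)
next
  case (insert t S)
  have gens: "\<forall>t\<in>J. b t \<in> cg_hom B 1" using lift by (simp add: lifts_on_def)
  have "ext_mono {t} \<in> cg_hom E 1" using ext_mono_hom[of "{t}" I D] insert.prems JI by auto
  then have "compatible J b (ext_mul (ext_mono {t}) (ext_mono S))"
    using compatible_mul[OF two JI gens _ compatible_gen[OF lift _ JI]] insert by auto
  then show ?case using ext_mono_insert[OF insert.hyps(1,2), where 'k='k] by simp
qed

lemma eval_compat:
  assumes two: "(2::'k) \<noteq> 0" and JI: "J \<subseteq> I" and lift: "lifts_on J b"
    and c: "c \<in> ext_span I J"
  shows "compatible J b c"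
proof -
  let ?F = "{S. c S \<noteq> 0}" and ?e = "\<lambda>S U. c S * ext_mono S U"
  have gens: "\<forall>t\<in>J. b t \<in> cg_hom B 1" using lift by (simp add: lifts_on_def)
  have e: "?e \<in> ?F \<rightarrow> ext_span I J" using span_expand(2)[OF c JI] .
  have "compatible J b (finsum (ring_of E) ?e F)" if "finite F" "F \<subseteq> ?F" for F
    using that
  proof (induction F rule: finite_induct)
    case empty
    have "compatible J b (\<lambda>S. 0 * ext_mono {} S)"
      using compatible_smult[OF gens compatible_one[OF gens]] .
    then show ?case by simp
  next
    case (insert S F)
    then have "compatible J b (?e S)"
      using compatible_smult[OF gens compatible_mono[OF two JI lift]] span_support[OF c] by auto
    moreover have "?e \<in> F \<rightarrow> ext_carrier I" "?e S \<in> ext_carrier I"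
      using e insert.prems span_carrier by (auto simp: Pi_iff)
    ultimately show ?case
      using compatible_add[OF gens] insert by (simp add: E.R.finsum_insert)
  qed
  then have "compatible J b (finsum (ring_of E) ?e ?F)" using span_finite[OF c] by blast
  then show ?thesis using span_expand(1)[OF c JI] by metis
qed

lemma eval_lift:
  assumes two: "(2::'k) \<noteq> 0" and lift: "lifts_on I b"
  shows "cdga_hom (ext_alg I D) B (ext_eval B b)"
    and "\<forall>x\<in>cg_carrier (ext_alg I D). \<psi> (ext_eval B b x) = f x"
proof -
  have gens: "\<forall>t\<in>I. b t \<in> cg_hom B 1" using lift by (simp add: lifts_on_def)
  have span: "x \<in> ext_span I I" if "x \<in> cg_carrier (ext_alg I D)" for x
    using that by (simp add: span_all)
  have compat: "ext_eval B b (D x) = cg_diff B (ext_eval B b x) \<and> \<psi> (ext_eval B b x) = f x"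
    if "x \<in> cg_carrier (ext_alg I D)" for x
    using eval_compat[OF two subset_refl lift span[OF that]] by (simp add: compatible_def)
  show "\<forall>x\<in>cg_carrier (ext_alg I D). \<psi> (ext_eval B b x) = f x" using compat by blast
  show "cdga_hom (ext_alg I D) B (ext_eval B b)"
    unfolding cdga_hom_def
  proof (intro conjI ballI allI)
    fix x assume x: "x \<in> cg_carrier (ext_alg I D)"
    show "ext_eval B b x \<in> cg_carrier B" by (rule eval_c[OF span[OF x] gens])
    show "ext_eval B b (cg_diff (ext_alg I D) x) = cg_diff B (ext_eval B b x)"
      using compat[OF x] by simp
    fix a show "ext_eval B b (cg_smult (ext_alg I D) a x) = cg_smult B a (ext_eval B b x)"
      using eval_smult[OF span[OF x] gens] by simp
  next
    fix x y assume x: "x \<in> cg_carrier (ext_alg I D)" and y: "y \<in> cg_carrier (ext_alg I D)"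
    show "ext_eval B b (cg_add (ext_alg I D) x y) = cg_add B (ext_eval B b x) (ext_eval B b y)"
      using eval_add[OF span[OF x] span[OF y] gens] by simp
    show "ext_eval B b (cg_mul (ext_alg I D) x y) = cg_mul B (ext_eval B b x) (ext_eval B b y)"
      using eval_mul[OF two span[OF x] span[OF y] gens subset_refl] by simp
  next
    fix i x assume x: "x \<in> cg_hom (ext_alg I D) i"
    then show "ext_eval B b x \<in> cg_hom B i"
      using eval_hom[OF span[OF E.hom_c[OF x]] x gens] by blast
  next
    show "ext_eval B b (cg_one (ext_alg I D)) = cg_one B"
      using eval_mono[of "{}" I b] gens by (simp add: mono_prod_def)
  qed
qed

end

locale lifting_problem = lift_ctx I D B A f \<psi>
  for I :: "'i::wellorder set" and D :: "('i set \<Rightarrow> 'k::field) \<Rightarrow> ('i set \<Rightarrow> 'k)"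
    and B :: "('b, 'k) cdga" and A :: "('a, 'k) cdga"
    and f :: "('i set \<Rightarrow> 'k) \<Rightarrow> 'a" and \<psi> :: "'b \<Rightarrow> 'a" +
  assumes two: "(2::'k) \<noteq> 0" and minimal: "minimal_deg1 I D"
    and connected: "cg_connected A" and quasi_iso: "quasi_iso B A \<psi>"
begin

abbreviation below :: "'i \<Rightarrow> 'i set" where
  "below \<tau> \<equiv> {\<mu> \<in> I. \<mu> < \<tau>}"

lemma diff_gen_span:
  assumes "\<tau> \<in> I"
  shows "D (ext_mono {\<tau>}) \<in> ext_span I (below \<tau>)"
proof -
  have "D (ext_mono {\<tau>}) \<in> subalg (ext_alg I D) (ext_gen ` below \<tau>)"
    using minimal assms unfolding minimal_deg1_def by (simp add: ext_gen_mono)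
  then have "\<forall>S. D (ext_mono {\<tau>}) S \<noteq> 0 \<longrightarrow> S \<subseteq> below \<tau>"
    by (rule subalg_gen_support)
  moreover have "D (ext_mono {\<tau>}) \<in> ext_carrier I"
    using E.d_c[of "ext_mono {\<tau>}"] ext_mono_carrier[of "{\<tau>}" I] assms by simp
  ultimately show ?thesis by (simp add: ext_span_def)
qed

lemma lift_next_generator:
  assumes \<tau>: "\<tau> \<in> I" and lift: "lifts_on (below \<tau>) b"
  obtains \<beta> where "\<beta> \<in> cg_hom B 1" "\<psi> \<beta> = f (ext_mono {\<tau>})"
    "cg_diff B \<beta> = ext_eval B b (D (ext_mono {\<tau>}))"
proof (rule quasi_iso_lift_degree1[OF cA cB connected quasi_iso])
  let ?x = "ext_mono {\<tau>} :: 'i set \<Rightarrow> 'k"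
  have gens: "\<forall>t\<in>below \<tau>. b t \<in> cg_hom B 1" using lift by (simp add: lifts_on_def)
  have xh: "?x \<in> cg_hom (ext_alg I D) 1" using ext_mono_hom[of "{\<tau>}" I D] \<tau> by simp
  have xC: "?x \<in> cg_carrier (ext_alg I D)" using xh E.hom_c by blast
  have y: "D ?x \<in> ext_span I (below \<tau>)" by (rule diff_gen_span[OF \<tau>])
  have compat: "ext_eval B b (D (D ?x)) = cg_diff B (ext_eval B b (D ?x))"
    "\<psi> (ext_eval B b (D ?x)) = f (D ?x)"
    using eval_compat[OF two _ lift y] by (auto simp: compatible_def)
  have "cg_diff B (ext_eval B b (D ?x)) = ext_eval B b (D (D ?x))"
    using compat(1) by simp
  also have "\<dots> = cg_zero B" using E.dd[OF xC] eval_zero by simp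
  finally have "cg_diff B (ext_eval B b (D ?x)) = cg_zero B" .
  moreover have "D ?x \<in> cg_hom (ext_alg I D) 2" using E.d_hom[OF xh] by (simp add: numeral_2_eq_2)
  then have "ext_eval B b (D ?x) \<in> cg_hom B 2" by (rule eval_hom[OF y _ gens])
  ultimately show "cocycle B 2 (ext_eval B b (D ?x))" by (simp add: cocycle_def)
  show "f ?x \<in> cg_hom A 1" using cdga_homD(2)[OF hf xh] .
  show "\<psi> (ext_eval B b (D ?x)) = cg_diff A (f ?x)"
    using compat(2) cdga_homD(7)[OF hf xC] by simp
qed

lemma exists_generator_lift: "\<exists>b. lifts_on I b"
proof -
  define R where "R = {(x::'i, y). x < y}"
  have wfR: "wf R" unfolding R_def by (rule wellorder_class.wf)
  define H where "H = (\<lambda>(h::'i \<Rightarrow> 'b) \<tau>. SOME \<beta>. \<beta> \<in> cg_hom B 1 \<and> \<psi> \<beta> = f (ext_mono {\<tau>}) \<and>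
      cg_diff B \<beta> = ext_eval B h (D (ext_mono {\<tau>})))"
  define b where "b = wfrec R H"
  have brec: "b \<tau> = H (cut b R \<tau>) \<tau>" for \<tau>
    by (rule def_wfrec[OF b_def[THEN eq_reflection] wfR])
  have span_below: "D (ext_mono {t}) \<in> ext_span I (below \<tau>)" if t: "t \<in> below \<tau>" for t \<tau>
  proof -
    have "below t \<subseteq> below \<tau>" using t by auto
    then show ?thesis using span_mono[OF diff_gen_span[of t]] t by blast
  qed
  define lifted where "lifted \<tau> \<longleftrightarrow> b \<tau> \<in> cg_hom B 1 \<and> \<psi> (b \<tau>) = f (ext_mono {\<tau>}) \<and>
      cg_diff B (b \<tau>) = ext_eval B b (D (ext_mono {\<tau>}))" for \<tau>
  have "lifted \<tau>" if "\<tau> \<in> I" for \<tau>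
    using that
  proof (induction \<tau> rule: less_induct)
    case (less \<tau>)
    let ?y = "D (ext_mono {\<tau>})"
    have below: "lifts_on (below \<tau>) b"
      using less.IH span_below[of _ \<tau>] by (auto simp: lifts_on_def lifted_def)
    have gens: "\<forall>t\<in>below \<tau>. b t \<in> cg_hom B 1" using below by (simp add: lifts_on_def)
    have "ext_eval B (cut b R \<tau>) ?y = ext_eval B b ?y"
      by (rule eval_cong[OF diff_gen_span[OF less.prems] _ gens]) (auto simp: cut_apply R_def)
    then have "b \<tau> = (SOME \<beta>. \<beta> \<in> cg_hom B 1 \<and> \<psi> \<beta> = f (ext_mono {\<tau>}) \<and>
        cg_diff B \<beta> = ext_eval B b ?y)"
      using brec[of \<tau>] by (simp add: H_def)
    moreover obtain \<beta> where "\<beta> \<in> cg_hom B 1 \<and> \<psi> \<beta> = f (ext_mono {\<tau>}) \<and>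
        cg_diff B \<beta> = ext_eval B b ?y"
      using lift_next_generator[OF less.prems below] by blast
    ultimately show "lifted \<tau>" unfolding lifted_def by (metis (mono_tags, lifting) someI)
  qed
  then have "lifts_on I b"
    using span_mono[OF diff_gen_span, of _ I] by (auto simp: lifts_on_def lifted_def)
  then show ?thesis by blast
qed

end

(* Characteristic \<noteq> 2 is used only in the form 2 \<noteq> 0. *)
lemma two_neq_zero:
  assumes "CHAR('k::field) \<noteq> 2"
  shows "(2::'k) \<noteq> 0"
proof
  assume "(2::'k) = 0"
  then have "of_nat 2 = (0::'k)" by simp
  then have "CHAR('k) dvd 2" by (simp only: of_nat_eq_0_iff_char_dvd)
  moreover from this have "CHAR('k) \<noteq> 0" by (metis dvd_0_left_iff zero_neq_numeral)
  moreover from \<open>CHAR('k) dvd 2\<close> have "CHAR('k) \<le> 2" by (rule dvd_imp_le) simp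
  ultimately show False using assms CHAR_not_1[where 'a='k] by linarith
qed

theorem theoremA2:
  fixes I :: "'i::wellorder set"
    and D :: "('i set \<Rightarrow> 'k::field) \<Rightarrow> ('i set \<Rightarrow> 'k)"
    and A :: "('a, 'k) cdga" and B :: "('b, 'k) cdga"
    and f :: "('i set \<Rightarrow> 'k) \<Rightarrow> 'a" and \<psi> :: "'b \<Rightarrow> 'a"
  assumes "CHAR('k) \<noteq> 2"
    and "minimal_deg1 I D"
    and "cdga A" and "cdga B" and "cg_connected A"
    and "cdga_hom (ext_alg I D) A f"
    and "quasi_iso B A \<psi>"
  shows "\<exists>g. cdga_hom (ext_alg I D) B g \<and>
             (\<forall>x\<in>cg_carrier (ext_alg I D). \<psi> (g x) = f x) \<and>
             (quasi_iso (ext_alg I D) A f \<longrightarrow> quasi_iso (ext_alg I D) B g)"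
proof -
  have E: "cdga (ext_alg I D)" using assms(2) by (simp add: minimal_deg1_def)
  interpret lifting_problem I D B A f \<psi>
    using assms E two_neq_zero[OF assms(1)]
    by unfold_locales (auto simp: quasi_iso_def)
  obtain b where b: "lifts_on I b" using exists_generator_lift by blast
  let ?g = "ext_eval B b"
  have hom: "cdga_hom (ext_alg I D) B ?g" and comm: "\<forall>x\<in>cg_carrier (ext_alg I D). \<psi> (?g x) = f x"
    using eval_lift[OF two b] by blast+
  have "quasi_iso (ext_alg I D) B ?g" if "quasi_iso (ext_alg I D) A f"
    using quasi_iso_cancel_left[OF E assms(3,4) hom assms(7) that comm] .
  with hom comm show ?thesis by blast
qed

end
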